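(* Let $L>0$, $V\in C^1([0,L];\mathbb{R})$ such that the only $x\in[0,L]$ with $V'(x)=0$ is $\mathbf{x}_0\in(0,L)$ and $V(\mathbf{x}_0)=\min_{[0,L]}V$. For $\varepsilon\in(0,1]$ let $q_\varepsilon\in C^1([0,L];\mathbb{R})$ with $q_\varepsilon\to0$ in $C^1([0,L])$, and $V_\varepsilon=V+q_\varepsilon$. Then for any family $(\lambda_\varepsilon)_{\varepsilon\in(0,1)}$ of real numbers with $\lambda_\varepsilon\to0$ as $\varepsilon\to0^+$ and any $\nu>0$, there are constants $C,\varepsilon_0>0$ such that for all $y\in[0,L]$, all $\varepsilon\in(0,\varepsilon_0]$, all $E\in\mathbb{R}$ and all $\psi$ satisfying $$-\varepsilon^2\psi''+V_\varepsilon\psi=E\psi,\qquad \psi\in H^2(0,L)\cap H^1_0(0,L),\qquad\|\psi\|_{L^2(0,L)}=1,$$ we have \begin{itemize} \item $\|\psi\|_{L^2(U)}\ge C$ with $U=(y-\nu,y+\nu)\cap[0,L]$, if $E\ge V(y)-\lambda_\varepsilon$; \item $\frac{\varepsilon}{\sqrt{|E|+1}}|\psi'(0)|\ge C$ if $E\ge V(0)+\nu$; \item $\frac{\varepsilon}{\sqrt{|E|+1}}|\psi'(L)|\ge C$ if $E\ge V(L)+\nu$. \end{itemize} *)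

theory Defs
  imports "HOL-Analysis.Analysis"
begin

definition C1_on_interval :: "real \<Rightarrow> (real \<Rightarrow> real) \<Rightarrow> (real \<Rightarrow> real) \<Rightarrow> bool" where
  "C1_on_interval L f f' \<longleftrightarrow>
     (\<forall>x\<in>{0..L}. (f has_real_derivative f' x) (at x within {0..L})) \<and> continuous_on {0..L} f'"

text \<open>Membership in H^2(0,L) of (the continuous representative) psi, with first derivative
  psi' and weak second derivative psi'': psi is differentiable on [0,L] with derivative psi',
  psi' is absolutely continuous with derivative psi'' (i.e. psi' x = psi' 0 + integral of psi''),
  and psi'' is in L^2(0,L).\<close>
definition H2_on :: "real \<Rightarrow> (real \<Rightarrow> complex) \<Rightarrow> (real \<Rightarrow> complex) \<Rightarrow> (real \<Rightarrow> complex) \<Rightarrow> bool" where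
  "H2_on L \<psi> \<psi>' \<psi>'' \<longleftrightarrow>
     (\<forall>x\<in>{0..L}. (\<psi> has_vector_derivative \<psi>' x) (at x within {0..L})) \<and>
     \<psi>'' absolutely_integrable_on {0..L} \<and>
     (\<lambda>x. (norm (\<psi>'' x))\<^sup>2) integrable_on {0..L} \<and>
     (\<forall>x\<in>{0..L}. \<psi>' x = \<psi>' 0 + integral {0..x} \<psi>'')"

text \<open>H^1_0(0,L) boundary condition for the continuous representative.\<close>
definition dirichlet_bc :: "real \<Rightarrow> (real \<Rightarrow> complex) \<Rightarrow> bool" where
  "dirichlet_bc L \<psi> \<longleftrightarrow> \<psi> 0 = 0 \<and> \<psi> L = 0"

definition L2_norm_on :: "real set \<Rightarrow> (real \<Rightarrow> complex) \<Rightarrow> real" where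
  "L2_norm_on U \<psi> = sqrt (integral U (\<lambda>x. (norm (\<psi> x))\<^sup>2))"

end

theory Submission
  imports Defs
begin

text \<open>
  Write \<open>\<psi> = a + i b\<close>, \<open>w = |\<psi>|\<^sup>2\<close> and \<open>f = E - W\<close> for the perturbed potential \<open>W\<close>.
  Where \<open>f \<le> -c < 0\<close> (classically forbidden region) an Agmon-type identity makes \<open>w\<close> decay
  away from the edge of the region at rate \<open>c / e\<^sup>2\<close>.  Where \<open>f \<ge> \<tau> > 0\<close> (allowed region)
  the energy density \<open>Q = e\<^sup>2 |\<psi>'|\<^sup>2 + f w\<close> satisfies \<open>Q' = - W' w\<close>, so \<open>R = Q / f\<close> obeys a
  Gronwall inequality and is comparable to a constant; normalisation bounds that constant from
  below, and the virial identity \<open>2 \<integral>f w = \<integral>Q - e\<^sup>2 [Re (conj \<psi> \<psi>')]\<close> turns this into a lower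
  bound for the mass of every window of fixed length, the boundary term being \<open>O(e)\<close>.

  For \<open>E\<close> above the bottom of the single well, the sublevel set of \<open>V\<close> below \<open>E\<close> is such an
  allowed interval, and every \<open>y\<close> with \<open>V y \<le> E + o(1)\<close> is close to it; beyond its ends
  \<open>V\<close> is strictly monotone, which controls the mass outside.  For \<open>E\<close> near the bottom the
  Agmon estimate concentrates half of the mass near the minimum \<open>x0\<close>, which is then also close
  to \<open>y\<close>.  At an endpoint \<open>z\<close> with \<open>V z + \<nu> \<le> E\<close>, \<open>w z = 0\<close> gives
  \<open>e\<^sup>2 |\<psi>' z|\<^sup>2 = Q z = f z R z\<close>, bounded below by the mass near \<open>z\<close>.
\<close>

section \<open>Monotonicity and Gronwall estimates\<close>

lemma integrable_continuous_subinterval: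
  fixes g :: "real \<Rightarrow> real"
  assumes "continuous_on {a..b} g" "a \<le> s" "t \<le> b"
  shows "g integrable_on {s..t}"
  using assms by (intro integrable_continuous_interval continuous_on_subset[OF assms(1)]) auto

lemma has_integral_derivative_subinterval:
  fixes F F' :: "real \<Rightarrow> real"
  assumes "\<And>x. x \<in> {a..b} \<Longrightarrow> (F has_real_derivative F' x) (at x within {a..b})"
    and "a \<le> s" "s \<le> t" "t \<le> b"
  shows "(F' has_integral (F t - F s)) {s..t}"
proof (rule fundamental_theorem_of_calculus[OF \<open>s \<le> t\<close>])
  fix x assume "x \<in> {s..t}"
  with assms have "(F has_real_derivative F' x) (at x within {s..t})"
    by (intro has_field_derivative_subset[OF assms(1)]) auto
  then show "(F has_vector_derivative F' x) (at x within {s..t})"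
    by (simp add: has_real_derivative_iff_has_vector_derivative)
qed

lemma nonincreasing_of_deriv_nonpos:
  fixes G G' :: "real \<Rightarrow> real"
  assumes "\<And>y. y \<in> {z..x} \<Longrightarrow> (G has_real_derivative G' y) (at y within {z..x})"
    and "\<And>y. y \<in> {z..x} \<Longrightarrow> G' y \<le> 0" and "z \<le> x"
  shows "G x \<le> G z"
proof -
  have "(G' has_integral (G x - G z)) {z..x}"
    by (rule has_integral_derivative_subinterval[OF assms(1)]) (use assms(3) in auto)
  from has_integral_le[OF this has_integral_0] assms(2) show ?thesis by auto
qed

lemma gronwall_forward:
  fixes G G' :: "real \<Rightarrow> real"
  assumes G': "\<And>y. y \<in> {z..x} \<Longrightarrow> (G has_real_derivative G' y) (at y within {z..x})"
    and bound: "\<And>y. y \<in> {z..x} \<Longrightarrow> G' y \<le> \<kappa> * G y" and "z \<le> x"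
  shows "G x \<le> exp (\<kappa> * (x - z)) * G z"
proof -
  define H where "H y = G y * exp (- \<kappa> * y)" for y
  have "H x \<le> H z"
  proof (rule nonincreasing_of_deriv_nonpos[OF _ _ \<open>z \<le> x\<close>])
    fix y assume y: "y \<in> {z..x}"
    show "(H has_real_derivative (G' y - \<kappa> * G y) * exp (- \<kappa> * y)) (at y within {z..x})"
      unfolding H_def[abs_def]
      by (rule DERIV_cong, (rule derivative_intros G'[OF y])+) (simp add: algebra_simps)
    show "(G' y - \<kappa> * G y) * exp (- \<kappa> * y) \<le> 0"
      using bound[OF y] by (simp add: mult_nonpos_nonneg)
  qed
  have "G x = H x * exp (\<kappa> * x)" by (simp add: H_def mult.assoc exp_add[symmetric])
  also have "\<dots> \<le> H z * exp (\<kappa> * x)" using \<open>H x \<le> H z\<close> by (intro mult_right_mono) auto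
  also have "\<dots> = exp (\<kappa> * (x - z)) * G z"
    by (simp add: H_def mult.assoc exp_add[symmetric] algebra_simps)
  finally show ?thesis .
qed

lemma gronwall_backward:
  fixes G G' :: "real \<Rightarrow> real"
  assumes G': "\<And>y. y \<in> {z..x} \<Longrightarrow> (G has_real_derivative G' y) (at y within {z..x})"
    and bound: "\<And>y. y \<in> {z..x} \<Longrightarrow> - \<kappa> * G y \<le> G' y" and "z \<le> x"
  shows "G z \<le> exp (\<kappa> * (x - z)) * G x"
proof -
  define H where "H y = - (G y * exp (\<kappa> * y))" for y
  have "H x \<le> H z"
  proof (rule nonincreasing_of_deriv_nonpos[OF _ _ \<open>z \<le> x\<close>])
    fix y assume y: "y \<in> {z..x}"
    show "(H has_real_derivative - ((G' y + \<kappa> * G y) * exp (\<kappa> * y))) (at y within {z..x})"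
      unfolding H_def[abs_def]
      by (rule DERIV_cong, (rule derivative_intros G'[OF y])+) (simp add: algebra_simps)
    show "- ((G' y + \<kappa> * G y) * exp (\<kappa> * y)) \<le> 0"
      using bound[OF y] by simp
  qed
  have "G z = - H z * exp (- \<kappa> * z)" by (simp add: H_def mult.assoc exp_add[symmetric])
  also have "\<dots> \<le> - H x * exp (- \<kappa> * z)" using \<open>H x \<le> H z\<close> by (intro mult_right_mono) auto
  also have "\<dots> = exp (\<kappa> * (x - z)) * G x"
    by (simp add: H_def mult.assoc exp_add[symmetric] algebra_simps)
  finally show ?thesis .
qed

lemma gronwall_two_sided:
  fixes G G' :: "real \<Rightarrow> real"
  assumes G': "\<And>y. y \<in> {s..t} \<Longrightarrow> (G has_real_derivative G' y) (at y within {s..t})"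
    and bound: "\<And>y. y \<in> {s..t} \<Longrightarrow> \<bar>G' y\<bar> \<le> \<kappa> * G y"
    and x: "x \<in> {s..t}" and z: "z \<in> {s..t}"
  shows "G x \<le> exp (\<kappa> * \<bar>x - z\<bar>) * G z"
proof (cases "z \<le> x")
  case True
  have "G x \<le> exp (\<kappa> * (x - z)) * G z"
  proof (rule gronwall_forward[OF _ _ True])
    fix y assume y: "y \<in> {z..x}"
    then have "y \<in> {s..t}" using x z by auto
    then show "(G has_real_derivative G' y) (at y within {z..x})" "G' y \<le> \<kappa> * G y"
      using has_field_derivative_subset[OF G'] bound abs_ge_self x z by (force, fastforce)
  qed
  then show ?thesis using True by simp
next
  case False
  have "G x \<le> exp (\<kappa> * (z - x)) * G z"
  proof (rule gronwall_backward)
    fix y assume y: "y \<in> {x..z}"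
    then have "y \<in> {s..t}" using x z by auto
    then show "(G has_real_derivative G' y) (at y within {x..z})" "- \<kappa> * G y \<le> G' y"
      using has_field_derivative_subset[OF G'] bound abs_ge_minus_self x z by (force, fastforce)
  qed (use False in auto)
  then show ?thesis using False by simp
qed


section \<open>Estimates for a Dirichlet eigenfunction\<close>

text \<open>\<open>a\<close> and \<open>b\<close> are the real and imaginary parts of \<open>\<psi>\<close>, with derivatives \<open>a'\<close>, \<open>b'\<close>;
  below \<open>w = |\<psi>|\<^sup>2\<close>, \<open>p = |\<psi>'|\<^sup>2\<close>, \<open>j = Re (conj \<psi> \<psi>') = w' / 2\<close>, \<open>f = E - W\<close> is the
  classical kinetic energy and \<open>Q\<close> the energy density.\<close>
locale dirichlet_eigenfunction =
  fixes L e E :: real and W W' a b a' b' :: "real \<Rightarrow> real"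
  assumes L_pos: "0 < L" and e_pos: "0 < e"
    and W_deriv: "\<And>x. x \<in> {0..L} \<Longrightarrow> (W has_real_derivative W' x) (at x within {0..L})"
    and a_deriv: "\<And>x. x \<in> {0..L} \<Longrightarrow> (a has_real_derivative a' x) (at x within {0..L})"
    and b_deriv: "\<And>x. x \<in> {0..L} \<Longrightarrow> (b has_real_derivative b' x) (at x within {0..L})"
    and a'_deriv: "\<And>x. x \<in> {0..L} \<Longrightarrow> (a' has_real_derivative (W x - E) / e\<^sup>2 * a x) (at x within {0..L})"
    and b'_deriv: "\<And>x. x \<in> {0..L} \<Longrightarrow> (b' has_real_derivative (W x - E) / e\<^sup>2 * b x) (at x within {0..L})"
    and boundary: "a 0 = 0" "b 0 = 0" "a L = 0" "b L = 0"
    and normalized: "integral {0..L} (\<lambda>x. (a x)\<^sup>2 + (b x)\<^sup>2) = 1"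
begin

definition "f x = E - W x"
definition "w x = (a x)\<^sup>2 + (b x)\<^sup>2"
definition "p x = (a' x)\<^sup>2 + (b' x)\<^sup>2"
definition "j x = a x * a' x + b x * b' x"
definition "Q x = e\<^sup>2 * p x + f x * w x"
definition "R x = Q x / f x"

lemma continuous_on_components:
  "continuous_on {0..L} W" "continuous_on {0..L} a" "continuous_on {0..L} b"
  "continuous_on {0..L} a'" "continuous_on {0..L} b'"
  using W_deriv a_deriv b_deriv a'_deriv b'_deriv
  by (meson DERIV_continuous continuous_on_eq_continuous_within)+

lemma continuous_w: "continuous_on {0..L} w"
  unfolding w_def using continuous_on_components by (intro continuous_intros)

lemma continuous_p: "continuous_on {0..L} p"
  unfolding p_def using continuous_on_components by (intro continuous_intros)

lemma continuous_fw: "continuous_on {0..L} (\<lambda>x. f x * w x)"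
  unfolding f_def using continuous_on_components continuous_w by (intro continuous_intros)

lemma continuous_Q: "continuous_on {0..L} Q"
  unfolding Q_def f_def using continuous_on_components continuous_w continuous_p by (intro continuous_intros)

lemma w_nonneg: "0 \<le> w x"
  unfolding w_def by simp

lemma p_nonneg: "0 \<le> p x"
  unfolding p_def by simp

lemma w_boundary: "w 0 = 0" "w L = 0" and j_boundary: "j 0 = 0" "j L = 0"
  using boundary by (simp_all add: w_def j_def)

lemma integral_w: "integral {0..L} w = 1"
  using normalized by (simp add: w_def[abs_def])

lemma w_deriv:
  assumes x: "x \<in> {0..L}" shows "(w has_real_derivative 2 * j x) (at x within {0..L})"
  unfolding w_def j_def
  by (rule DERIV_cong, (rule derivative_intros a_deriv[OF x] b_deriv[OF x])+) (simp add: algebra_simps)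

lemma j_deriv:
  assumes x: "x \<in> {0..L}" shows "(j has_real_derivative p x - f x * w x / e\<^sup>2) (at x within {0..L})"
  unfolding p_def j_def f_def w_def
  by (rule DERIV_cong, (rule derivative_intros a_deriv[OF x] b_deriv[OF x] a'_deriv[OF x] b'_deriv[OF x])+)
     (use e_pos in \<open>simp add: field_simps power2_eq_square\<close>)

lemma f_deriv:
  assumes x: "x \<in> {0..L}" shows "(f has_real_derivative - W' x) (at x within {0..L})"
  unfolding f_def[abs_def] by (rule derivative_eq_intros W_deriv[OF x] | simp)+

lemma Q_deriv:
  assumes x: "x \<in> {0..L}" shows "(Q has_real_derivative - W' x * w x) (at x within {0..L})"
  unfolding Q_def p_def w_def f_def
  by (rule DERIV_cong, (rule derivative_intros a_deriv[OF x] b_deriv[OF x] a'_deriv[OF x] b'_deriv[OF x]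
      W_deriv[OF x])+) (use e_pos in \<open>simp add: field_simps power2_eq_square\<close>)

lemma R_deriv:
  assumes x: "x \<in> {0..L}" and fx: "f x \<noteq> 0"
  shows "(R has_real_derivative W' x * e\<^sup>2 * p x / (f x)\<^sup>2) (at x within {0..L})"
  unfolding R_def[abs_def]
  by (rule DERIV_cong, rule DERIV_divide[OF Q_deriv[OF x] f_deriv[OF x] fx])
     (use fx in \<open>simp add: Q_def field_simps power2_eq_square\<close>)

lemma Q_eq_f_R: "0 < f x \<Longrightarrow> Q x = f x * R x"
  unfolding R_def by simp

lemma w_le_R: "0 < f x \<Longrightarrow> w x \<le> R x"
  unfolding R_def Q_def using p_nonneg[of x] e_pos by (simp add: field_simps)

lemma R_nonneg: "0 < f x \<Longrightarrow> 0 \<le> R x"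
  using w_le_R w_nonneg order_trans by blast

lemma energy_identity: "e\<^sup>2 * integral {0..L} p = integral {0..L} (\<lambda>x. f x * w x)"
proof -
  have "((\<lambda>x. p x - f x * w x / e\<^sup>2) has_integral (j L - j 0)) {0..L}"
    by (rule has_integral_derivative_subinterval[OF j_deriv]) (use L_pos in auto)
  then have "integral {0..L} (\<lambda>x. p x - f x * w x / e\<^sup>2) = 0"
    by (simp add: integral_unique j_boundary)
  moreover have "integral {0..L} (\<lambda>x. p x - f x * w x / e\<^sup>2)
      = integral {0..L} p - integral {0..L} (\<lambda>x. f x * w x) / e\<^sup>2"
    by (intro integral_unique has_integral_diff has_integral_divide integrable_integral
        integrable_continuous_subinterval[OF continuous_p] integrable_continuous_subinterval[OF continuous_fw]) auto
  ultimately show ?thesis using e_pos by (simp add: field_simps)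
qed

lemma w_le_integral_p:
  assumes A: "A > 0" and x: "x \<in> {0..L}"
  shows "w x \<le> A + integral {0..L} p / A"
proof -
  have pointwise: "2 * j y \<le> A * w y + p y / A" for y
  proof -
    have "0 \<le> (A * a y - a' y)\<^sup>2 + (A * b y - b' y)\<^sup>2" by simp
    also have "\<dots> = A * (A * w y + p y / A - 2 * j y)"
      using A by (simp add: j_def w_def p_def field_simps power2_eq_square)
    finally show ?thesis using A by (simp add: zero_le_mult_iff)
  qed
  have cont: "continuous_on {0..L} (\<lambda>y. A * w y + p y / A)"
    using continuous_w continuous_p by (intro continuous_intros) (use A in auto)
  have "w x - w 0 \<le> integral {0..x} (\<lambda>y. A * w y + p y / A)"
    by (rule has_integral_le[OF has_integral_derivative_subinterval[OF w_deriv]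
          integrable_integral[OF integrable_continuous_subinterval[OF cont]]])
       (use x pointwise in auto)
  also have "\<dots> \<le> integral {0..L} (\<lambda>y. A * w y + p y / A)"
    by (rule integral_subset_le) (use x A w_nonneg p_nonneg in \<open>auto intro!: integrable_continuous_subinterval[OF cont]\<close>)
  also have "\<dots> = A * 1 + integral {0..L} p / A"
  proof (intro integral_unique has_integral_add has_integral_mult_right has_integral_divide)
    show "(w has_integral 1) {0..L}"
      using integrable_integral[OF integrable_continuous_subinterval[OF continuous_w, of 0 L]] integral_w by simp
    show "(p has_integral integral {0..L} p) {0..L}"
      using integrable_integral[OF integrable_continuous_subinterval[OF continuous_p, of 0 L]] by simp
  qed
  finally show ?thesis by (simp add: w_boundary)
qed

text \<open>With the energy identity: if \<open>f \<le> c\<close> everywhere, then \<open>\<integral>p \<le> c / e\<^sup>2\<close>; take \<open>A = 1 / e\<close>.\<close>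
lemma w_le_of_f_le:
  assumes f_le: "\<And>x. x \<in> {0..L} \<Longrightarrow> f x \<le> c" and x: "x \<in> {0..L}"
  shows "w x \<le> (1 + c) / e"
proof -
  have "e\<^sup>2 * integral {0..L} p \<le> integral {0..L} (\<lambda>x. c * w x)"
    unfolding energy_identity
    by (rule integral_le) (use f_le w_nonneg in \<open>auto intro!: integrable_continuous_subinterval continuous_fw
        continuous_w integrable_on_mult_right mult_right_mono\<close>)
  also have "\<dots> = c" using integral_w by simp
  finally have "integral {0..L} p / (1 / e) \<le> c / e"
    using e_pos by (simp add: field_simps power2_eq_square)
  moreover have "w x \<le> 1 / e + integral {0..L} p / (1 / e)"
    by (rule w_le_integral_p) (use e_pos x in auto)
  ultimately show ?thesis by (simp add: add_divide_distrib)
qed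

text \<open>The function \<open>(x - s) w' - w\<close> has derivative \<open>2 (x - s) (p - f w / e\<^sup>2)\<close>, which is at
  least \<open>2 c (x - s) w / e\<^sup>2\<close> where \<open>f \<le> -c\<close>.\<close>
lemma agmon_right:
  assumes s: "0 \<le> s" "s \<le> L" and c: "c > 0" and forbidden: "\<And>x. x \<in> {s..L} \<Longrightarrow> f x \<le> - c"
  shows "2 * c / e\<^sup>2 * integral {s..L} (\<lambda>x. (x - s) * w x) \<le> w s"
proof -
  define F where "F x = (x - s) * (2 * j x) - w x" for x
  have "(F has_real_derivative 2 * (x - s) * (p x - f x * w x / e\<^sup>2)) (at x within {0..L})"
    if "x \<in> {0..L}" for x
    unfolding F_def by (rule DERIV_cong, (rule derivative_intros j_deriv w_deriv that)+) (simp add: algebra_simps)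
  from has_integral_derivative_subinterval[OF this, of s L] s
  have "((\<lambda>x. 2 * (x - s) * (p x - f x * w x / e\<^sup>2)) has_integral w s) {s..L}"
    by (simp add: F_def j_boundary w_boundary)
  moreover have "2 * c / e\<^sup>2 * ((x - s) * w x) \<le> 2 * (x - s) * (p x - f x * w x / e\<^sup>2)"
    if x: "x \<in> {s..L}" for x
  proof -
    have "c * w x \<le> - f x * w x" using forbidden[OF x] w_nonneg[of x] by (intro mult_right_mono) auto
    moreover have "0 \<le> e\<^sup>2 * p x" using p_nonneg[of x] by simp
    ultimately have "c * w x \<le> e\<^sup>2 * p x - f x * w x" by linarith
    then have "2 * (x - s) / e\<^sup>2 * (c * w x) \<le> 2 * (x - s) / e\<^sup>2 * (e\<^sup>2 * p x - f x * w x)"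
      using x by (intro mult_left_mono) auto
    then show ?thesis using e_pos by (simp add: field_simps)
  qed
  moreover have "(\<lambda>x. 2 * c / e\<^sup>2 * ((x - s) * w x)) integrable_on {s..L}"
    by (rule integrable_continuous_subinterval) (use s e_pos continuous_w in \<open>auto intro!: continuous_intros\<close>)
  ultimately have "integral {s..L} (\<lambda>x. 2 * c / e\<^sup>2 * ((x - s) * w x)) \<le> w s"
    by (intro has_integral_le[OF integrable_integral]) auto
  then show ?thesis by simp
qed

lemma agmon_left:
  assumes s: "0 \<le> s" "s \<le> L" and c: "c > 0" and forbidden: "\<And>x. x \<in> {0..s} \<Longrightarrow> f x \<le> - c"
  shows "2 * c / e\<^sup>2 * integral {0..s} (\<lambda>x. (s - x) * w x) \<le> w s"
proof -
  define F where "F x = (s - x) * (2 * j x) + w x" for x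
  have "(F has_real_derivative 2 * (s - x) * (p x - f x * w x / e\<^sup>2)) (at x within {0..L})"
    if "x \<in> {0..L}" for x
    unfolding F_def by (rule DERIV_cong, (rule derivative_intros j_deriv w_deriv that)+) (simp add: algebra_simps)
  from has_integral_derivative_subinterval[OF this, of 0 s] s
  have "((\<lambda>x. 2 * (s - x) * (p x - f x * w x / e\<^sup>2)) has_integral w s) {0..s}"
    by (simp add: F_def j_boundary w_boundary)
  moreover have "2 * c / e\<^sup>2 * ((s - x) * w x) \<le> 2 * (s - x) * (p x - f x * w x / e\<^sup>2)"
    if x: "x \<in> {0..s}" for x
  proof -
    have "c * w x \<le> - f x * w x" using forbidden[OF x] w_nonneg[of x] by (intro mult_right_mono) auto
    moreover have "0 \<le> e\<^sup>2 * p x" using p_nonneg[of x] by simp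
    ultimately have "c * w x \<le> e\<^sup>2 * p x - f x * w x" by linarith
    then have "2 * (s - x) / e\<^sup>2 * (c * w x) \<le> 2 * (s - x) / e\<^sup>2 * (e\<^sup>2 * p x - f x * w x)"
      using x by (intro mult_left_mono) auto
    then show ?thesis using e_pos by (simp add: field_simps)
  qed
  moreover have "(\<lambda>x. 2 * c / e\<^sup>2 * ((s - x) * w x)) integrable_on {0..s}"
    by (rule integrable_continuous_subinterval) (use s e_pos continuous_w in \<open>auto intro!: continuous_intros\<close>)
  ultimately have "integral {0..s} (\<lambda>x. 2 * c / e\<^sup>2 * ((s - x) * w x)) \<le> w s"
    by (intro has_integral_le[OF integrable_integral]) auto
  then show ?thesis by simp
qed

lemma agmon_tail_right:
  assumes s: "0 \<le> s" "s < t" "t \<le> L" and c: "c > 0"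
    and forbidden: "\<And>x. x \<in> {s..L} \<Longrightarrow> f x \<le> - c"
  shows "integral {t..L} w \<le> e\<^sup>2 * w s / (2 * c * (t - s))"
proof -
  have cont: "continuous_on {0..L} (\<lambda>x. (x - s) * w x)"
    using continuous_w by (intro continuous_intros)
  have "integral {t..L} w \<le> integral {t..L} (\<lambda>x. (x - s) * w x) / (t - s)"
    unfolding integral_divide[symmetric]
  proof (rule integral_le)
    fix x assume x: "x \<in> {t..L}"
    have "1 * w x \<le> (x - s) / (t - s) * w x" using x s w_nonneg[of x] by (intro mult_right_mono) auto
    then show "w x \<le> (x - s) * w x / (t - s)" by simp
  qed (use s in \<open>auto intro!: integrable_continuous_subinterval continuous_w cont\<close>)
  also have "\<dots> \<le> integral {s..L} (\<lambda>x. (x - s) * w x) / (t - s)"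
    by (intro divide_right_mono integral_subset_le) (use s w_nonneg in \<open>auto intro!: integrable_continuous_subinterval[OF cont]\<close>)
  also have "\<dots> \<le> e\<^sup>2 * w s / (2 * c) / (t - s)"
    using agmon_right[OF s(1) _ c forbidden] s e_pos c by (intro divide_right_mono) (auto simp: field_simps)
  finally show ?thesis by simp
qed

lemma agmon_tail_left:
  assumes s: "0 \<le> t" "t < s" "s \<le> L" and c: "c > 0"
    and forbidden: "\<And>x. x \<in> {0..s} \<Longrightarrow> f x \<le> - c"
  shows "integral {0..t} w \<le> e\<^sup>2 * w s / (2 * c * (s - t))"
proof -
  have cont: "continuous_on {0..L} (\<lambda>x. (s - x) * w x)"
    using continuous_w by (intro continuous_intros)
  have "integral {0..t} w \<le> integral {0..t} (\<lambda>x. (s - x) * w x) / (s - t)"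
    unfolding integral_divide[symmetric]
  proof (rule integral_le)
    fix x assume x: "x \<in> {0..t}"
    have "1 * w x \<le> (s - x) / (s - t) * w x" using x s w_nonneg[of x] by (intro mult_right_mono) auto
    then show "w x \<le> (s - x) * w x / (s - t)" by simp
  qed (use s in \<open>auto intro!: integrable_continuous_subinterval continuous_w cont\<close>)
  also have "\<dots> \<le> integral {0..s} (\<lambda>x. (s - x) * w x) / (s - t)"
    by (intro divide_right_mono integral_subset_le) (use s w_nonneg in \<open>auto intro!: integrable_continuous_subinterval[OF cont]\<close>)
  also have "\<dots> \<le> e\<^sup>2 * w s / (2 * c) / (s - t)"
    using agmon_left[OF _ s(3) c forbidden] s e_pos c by (intro divide_right_mono) (auto simp: field_simps)
  finally show ?thesis by simp
qed

lemma energy_tail_right: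
  assumes s: "0 \<le> s" "s \<le> L" and slope: "\<And>x. x \<in> {s..L} \<Longrightarrow> \<mu> \<le> W' x"
  shows "\<mu> * integral {s..L} w \<le> Q s"
proof -
  have "((\<lambda>x. - W' x * w x) has_integral (Q L - Q s)) {s..L}"
    by (rule has_integral_derivative_subinterval[OF Q_deriv]) (use s in auto)
  moreover have "(\<lambda>x. - (\<mu> * w x)) integrable_on {s..L}"
    by (rule integrable_continuous_subinterval) (use s continuous_w in \<open>auto intro!: continuous_intros\<close>)
  ultimately have "Q L - Q s \<le> integral {s..L} (\<lambda>x. - (\<mu> * w x))"
    by (rule has_integral_le[OF _ integrable_integral]) (use slope w_nonneg in \<open>auto intro!: mult_right_mono\<close>)
  moreover have "0 \<le> Q L" using p_nonneg by (simp add: Q_def w_boundary)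
  ultimately show ?thesis by simp
qed

lemma energy_tail_left:
  assumes s: "0 \<le> s" "s \<le> L" and slope: "\<And>x. x \<in> {0..s} \<Longrightarrow> W' x \<le> - \<mu>"
  shows "\<mu> * integral {0..s} w \<le> Q s"
proof -
  have "(\<lambda>x. \<mu> * w x) integrable_on {0..s}"
    by (rule integrable_continuous_subinterval) (use s continuous_w in \<open>auto intro!: continuous_intros\<close>)
  moreover have "((\<lambda>x. - W' x * w x) has_integral (Q s - Q 0)) {0..s}"
    by (rule has_integral_derivative_subinterval[OF Q_deriv]) (use s in auto)
  ultimately have "integral {0..s} (\<lambda>x. \<mu> * w x) \<le> Q s - Q 0"
    by (rule has_integral_le[OF integrable_integral])
       (use slope w_nonneg in \<open>force intro!: mult_right_mono[of _ "- W' _", simplified]\<close>)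
  moreover have "0 \<le> Q 0" using p_nonneg by (simp add: Q_def w_boundary)
  ultimately show ?thesis by simp
qed

lemma R_le_exp_R:
  assumes st: "0 \<le> s" "t \<le> L" and \<tau>: "\<tau> > 0"
    and allowed: "\<And>x. x \<in> {s..t} \<Longrightarrow> \<tau> \<le> f x \<and> \<bar>W' x\<bar> \<le> K"
    and x: "x \<in> {s..t}" and z: "z \<in> {s..t}"
  shows "R x \<le> exp (K / \<tau> * (t - s)) * R z"
proof -
  have "R x \<le> exp (K / \<tau> * \<bar>x - z\<bar>) * R z"
  proof (rule gronwall_two_sided[OF _ _ x z])
    fix y assume y: "y \<in> {s..t}"
    have fy: "\<tau> \<le> f y" "\<bar>W' y\<bar> \<le> K" using allowed[OF y] by auto
    show "(R has_real_derivative W' y * e\<^sup>2 * p y / (f y)\<^sup>2) (at y within {s..t})"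
      by (rule has_field_derivative_subset[OF R_deriv]) (use y st fy \<tau> in auto)
    have "\<bar>W' y * e\<^sup>2 * p y / (f y)\<^sup>2\<bar> = \<bar>W' y\<bar> / f y * (e\<^sup>2 * p y / f y)"
      using fy \<tau> p_nonneg[of y] by (simp add: abs_mult power2_eq_square)
    also have "\<dots> \<le> K / \<tau> * R y"
    proof (rule mult_mono)
      show "\<bar>W' y\<bar> / f y \<le> K / \<tau>"
        using fy \<tau> by (intro frac_le) auto
      show "e\<^sup>2 * p y / f y \<le> R y"
        unfolding R_def Q_def using fy \<tau> w_nonneg[of y] by (simp add: add_divide_distrib)
    qed (use fy \<tau> p_nonneg[of y] in auto)
    finally show "\<bar>W' y * e\<^sup>2 * p y / (f y)\<^sup>2\<bar> \<le> K / \<tau> * R y" .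
  qed
  also have "\<dots> \<le> exp (K / \<tau> * (t - s)) * R z"
  proof -
    have "0 \<le> K" using allowed[OF x] by (auto intro: order_trans[OF abs_ge_zero])
    then have "K / \<tau> * \<bar>x - z\<bar> \<le> K / \<tau> * (t - s)" using x z \<tau> by (intro mult_left_mono) auto
    moreover have "0 \<le> R z" using allowed[OF z] \<tau> by (intro R_nonneg) auto
    ultimately show ?thesis by (intro mult_right_mono) auto
  qed
  finally show ?thesis .
qed

lemma integral_fw_eq:
  assumes st: "0 \<le> s" "s \<le> t" "t \<le> L"
  shows "integral {s..t} (\<lambda>x. f x * w x) = integral {s..t} Q / 2 - e\<^sup>2 * (j t - j s) / 2"
proof -
  have "((\<lambda>x. e\<^sup>2 * (p x - f x * w x / e\<^sup>2)) has_integral e\<^sup>2 * (j t - j s)) {s..t}"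
    by (intro has_integral_mult_right has_integral_derivative_subinterval[OF j_deriv]) (use st in auto)
  moreover have "(\<lambda>x. e\<^sup>2 * (p x - f x * w x / e\<^sup>2)) = (\<lambda>x. Q x - 2 * (f x * w x))"
    using e_pos by (auto simp: Q_def field_simps)
  ultimately have "integral {s..t} (\<lambda>x. Q x - 2 * (f x * w x)) = e\<^sup>2 * (j t - j s)"
    by (simp add: integral_unique)
  moreover have "integral {s..t} (\<lambda>x. Q x - 2 * (f x * w x))
      = integral {s..t} Q - 2 * integral {s..t} (\<lambda>x. f x * w x)"
    using integrable_continuous_subinterval[OF continuous_Q st(1) st(3)] integrable_continuous_subinterval[OF continuous_fw st(1) st(3)]
    by (simp add: integral_diff)
  ultimately show ?thesis by simp
qed

lemma abs_j_le:
  assumes fx: "0 < f x"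
  shows "e\<^sup>2 * \<bar>j x\<bar> \<le> e * R x * sqrt (f x) / 2"
proof -
  define r where "r = sqrt (f x)"
  have r: "r > 0" "f x = r * r" using fx by (auto simp: r_def)
  have "Q x - 2 * e * r * j x = (e * a' x - r * a x)\<^sup>2 + (e * b' x - r * b x)\<^sup>2"
    and "Q x + 2 * e * r * j x = (e * a' x + r * a x)\<^sup>2 + (e * b' x + r * b x)\<^sup>2"
    unfolding Q_def p_def w_def j_def r(2) by (simp_all add: power2_eq_square algebra_simps)
  then have "0 \<le> Q x - 2 * e * r * j x" "0 \<le> Q x + 2 * e * r * j x" by simp_all
  then have "2 * e * r * \<bar>j x\<bar> \<le> Q x" by (auto simp: abs_if)
  also have "Q x = r * (r * R x)" using Q_eq_f_R[OF fx] r by simp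
  finally have "2 * e * \<bar>j x\<bar> \<le> r * R x" using r by (simp add: mult.assoc)
  then have "e * (2 * e * \<bar>j x\<bar>) \<le> e * (r * R x)" using e_pos by simp
  then show ?thesis unfolding r_def by (simp add: power2_eq_square algebra_simps)
qed

text \<open>Since \<open>(e\<^sup>2 j)' = e\<^sup>2 p - f w\<close> and \<open>Q = e\<^sup>2 p + f w\<close>, we have
  \<open>2 \<integral>f w = \<integral>Q - e\<^sup>2 [j]\<close>. On an allowed interval \<open>Q = f R\<close> with \<open>R\<close> almost constant,
  while the boundary term is only \<open>O(e)\<close> by \<open>abs_j_le\<close>.\<close>
lemma integral_fw_ge:
  assumes st: "0 \<le> s" "s < t" "t \<le> L" and \<tau>: "\<tau> > 0" and \<rho>: "\<rho> > 0"
    and allowed: "\<And>x. x \<in> {s..t} \<Longrightarrow> \<tau> \<le> f x \<and> \<bar>W' x\<bar> \<le> K"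
    and S: "\<And>x. x \<in> {s..t} \<Longrightarrow> f x \<le> S \<and> S \<le> \<rho> * f x"
  defines "D \<equiv> exp (K / \<tau> * (t - s))"
  shows "R s * ((t - s) * S / (\<rho> * D) - e * sqrt S * D) / 2 \<le> integral {s..t} (\<lambda>x. f x * w x)"
proof -
  have sJ: "s \<in> {s..t}" and tJ: "t \<in> {s..t}" using st by auto
  have f_pos: "0 < f x" if "x \<in> {s..t}" for x using allowed[OF that] \<tau> by auto
  have D: "D > 0" by (simp add: D_def)
  have Rs: "0 \<le> R s" using R_nonneg[OF f_pos[OF sJ]] .
  have R_le: "R x \<le> D * R s" if x: "x \<in> {s..t}" for x
    unfolding D_def by (rule R_le_exp_R[OF st(1) st(3) \<tau> allowed x sJ])
  have Q_ge: "S / \<rho> * (R s / D) \<le> Q x" if x: "x \<in> {s..t}" for x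
  proof -
    have "R s \<le> D * R x" unfolding D_def by (rule R_le_exp_R[OF st(1) st(3) \<tau> allowed sJ x])
    then have "R s / D \<le> R x" using D by (simp add: divide_le_eq mult.commute)
    moreover have "S / \<rho> \<le> f x" using S[OF x] \<rho> by (simp add: divide_le_eq mult.commute)
    ultimately have "S / \<rho> * (R s / D) \<le> f x * R x"
      using Rs D f_pos[OF x] by (intro mult_mono) auto
    then show ?thesis using Q_eq_f_R[OF f_pos[OF x]] by simp
  qed
  have "integral {s..t} (\<lambda>x. S / \<rho> * (R s / D)) \<le> integral {s..t} Q"
    by (rule integral_le) (use Q_ge integrable_continuous_subinterval[OF continuous_Q st(1) st(3)] in auto)
  moreover have "integral {s..t} (\<lambda>x. S / \<rho> * (R s / D)) = (t - s) * (S / \<rho> * (R s / D))"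
    using st by simp
  ultimately have integral_Q: "(t - s) * (S / \<rho> * (R s / D)) \<le> integral {s..t} Q" by linarith
  have j_le: "e\<^sup>2 * \<bar>j x\<bar> \<le> e * (D * R s) * sqrt S / 2" if x: "x \<in> {s..t}" for x
  proof -
    have "e\<^sup>2 * \<bar>j x\<bar> \<le> e * R x * sqrt (f x) / 2" by (rule abs_j_le[OF f_pos[OF x]])
    also have "\<dots> \<le> e * (D * R s) * sqrt S / 2"
      using R_le[OF x] S[OF x] e_pos R_nonneg[OF f_pos[OF x]] f_pos[OF x]
      by (intro divide_right_mono mult_mono mult_left_mono) auto
    finally show ?thesis .
  qed
  have "j t - j s \<le> \<bar>j t\<bar> + \<bar>j s\<bar>" by linarith
  then have "e\<^sup>2 * (j t - j s) \<le> e\<^sup>2 * \<bar>j t\<bar> + e\<^sup>2 * \<bar>j s\<bar>"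
    unfolding distrib_left[symmetric] by (rule mult_left_mono) simp
  then have "e\<^sup>2 * (j t - j s) \<le> e * (D * R s) * sqrt S" using j_le[OF sJ] j_le[OF tJ] by linarith
  with integral_Q have "(t - s) * (S / \<rho> * (R s / D)) / 2 - e * (D * R s) * sqrt S / 2
      \<le> integral {s..t} Q / 2 - e\<^sup>2 * (j t - j s) / 2"
    by (intro diff_mono divide_right_mono) auto
  also have "\<dots> = integral {s..t} (\<lambda>x. f x * w x)"
    using integral_fw_eq[OF st(1) less_imp_le[OF st(2)] st(3)] by simp
  finally have "(t - s) * (S / \<rho> * (R s / D)) / 2 - e * (D * R s) * sqrt S / 2
      \<le> integral {s..t} (\<lambda>x. f x * w x)" .
  then show ?thesis using \<rho> D by (simp add: field_simps)
qed

lemma integral_w_ge_R: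
  assumes st: "0 \<le> s" "s < t" "t \<le> L" and \<tau>: "\<tau> > 0" and \<rho>: "\<rho> > 0"
    and allowed: "\<And>x. x \<in> {s..t} \<Longrightarrow> \<tau> \<le> f x \<and> \<bar>W' x\<bar> \<le> K"
    and S: "\<And>x. x \<in> {s..t} \<Longrightarrow> f x \<le> S \<and> S \<le> \<rho> * f x"
  defines "D \<equiv> exp (K / \<tau> * (t - s))"
  shows "R s * ((t - s) / (2 * \<rho> * D) - e * D / (2 * sqrt S)) \<le> integral {s..t} w"
proof -
  have S_pos: "S > 0" using S[of s] allowed[of s] st \<tau> by auto
  have "integral {s..t} (\<lambda>x. f x * w x) \<le> integral {s..t} (\<lambda>x. S * w x)"
    by (rule integral_le) (use integrable_continuous_subinterval[OF continuous_fw st(1) st(3)]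
        integrable_continuous_subinterval[OF continuous_w st(1) st(3)] S w_nonneg
        in \<open>auto intro!: mult_right_mono integrable_on_mult_right\<close>)
  then have "R s * ((t - s) * S / (\<rho> * D) - e * sqrt S * D) / 2 \<le> S * integral {s..t} w"
    using integral_fw_ge[OF st \<tau> \<rho> allowed S] unfolding D_def by simp
  moreover have "R s * ((t - s) * S / (\<rho> * D) - e * sqrt S * D) / 2
      = S * (R s * ((t - s) / (2 * \<rho> * D) - e * D / (2 * sqrt S)))"
  proof -
    have "S / sqrt S = sqrt S" using S_pos by (simp add: real_div_sqrt)
    moreover have "sqrt S > 0" "D > 0" using S_pos by (simp_all add: D_def)
    ultimately show ?thesis using \<rho> by (simp add: field_simps)
  qed
  ultimately show ?thesis using S_pos by (simp add: mult_le_cancel_left_pos)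
qed

text \<open>With \<open>S = f s + 2 M\<close> the hypothesis \<open>S \<le> \<rho> f\<close> of \<open>integral_w_ge_R\<close> holds for
  \<open>\<rho> = 1 + 4 M / \<tau>\<close>; the smallness of \<open>e\<close> then absorbs the boundary term.\<close>
lemma integral_w_ge_R_small_e:
  assumes st: "0 \<le> s" "s < t" "t \<le> L" and \<tau>: "\<tau> > 0"
    and allowed: "\<And>x. x \<in> {s..t} \<Longrightarrow> \<tau> \<le> f x \<and> \<bar>W' x\<bar> \<le> K \<and> \<bar>W x\<bar> \<le> M"
  defines "D \<equiv> exp (K / \<tau> * (t - s))" and "\<rho> \<equiv> 1 + 4 * M / \<tau>"
  assumes small: "e \<le> (t - s) * sqrt \<tau> / (2 * \<rho> * D\<^sup>2)"
  shows "R s * ((t - s) / (4 * \<rho> * D)) \<le> integral {s..t} w"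
proof -
  define S where "S = f s + 2 * M"
  have sI: "s \<in> {s..t}" using st by auto
  have "\<bar>W s\<bar> \<le> M" using allowed[OF sI] by auto
  then have \<rho>: "\<rho> \<ge> 1" using \<tau> by (simp add: \<rho>_def)
  have D: "D > 0" by (simp add: D_def)
  have S: "f x \<le> S \<and> S \<le> \<rho> * f x" if x: "x \<in> {s..t}" for x
  proof
    have W_bound: "\<bar>W s\<bar> \<le> M" "\<bar>W x\<bar> \<le> M" using allowed sI x by auto
    show "f x \<le> S" using W_bound unfolding S_def f_def by (auto simp: abs_le_iff)
    have "(\<rho> - 1) * \<tau> = 4 * M" using \<tau> by (simp add: \<rho>_def)
    moreover have "S \<le> f x + 4 * M" using W_bound unfolding S_def f_def by (auto simp: abs_le_iff)
    moreover have "(\<rho> - 1) * \<tau> \<le> (\<rho> - 1) * f x" using \<rho> allowed[OF x] by (intro mult_left_mono) auto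
    ultimately show "S \<le> \<rho> * f x" by (simp add: algebra_simps)
  qed
  have "\<tau> \<le> S" using S[OF sI] allowed[OF sI] by auto
  have "e * D / (2 * sqrt S) \<le> e * D / (2 * sqrt \<tau>)"
    using \<open>\<tau> \<le> S\<close> \<tau> e_pos D by (intro divide_left_mono mult_pos_pos) auto
  also have "\<dots> \<le> (t - s) * sqrt \<tau> / (2 * \<rho> * D\<^sup>2) * D / (2 * sqrt \<tau>)"
    using small \<tau> D by (intro divide_right_mono mult_right_mono) auto
  also have "\<dots> = (t - s) / (4 * \<rho> * D)"
    using \<tau> \<rho> D by (simp add: field_simps power2_eq_square)
  finally have "e * D / (2 * sqrt S) \<le> (t - s) / (4 * \<rho> * D)" .
  moreover have "(t - s) / (2 * \<rho> * D) = 2 * ((t - s) / (4 * \<rho> * D))" using \<rho> D by (simp add: field_simps)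
  ultimately have "(t - s) / (4 * \<rho> * D) \<le> (t - s) / (2 * \<rho> * D) - e * D / (2 * sqrt S)"
    by linarith
  then have "R s * ((t - s) / (4 * \<rho> * D)) \<le> R s * ((t - s) / (2 * \<rho> * D) - e * D / (2 * sqrt S))"
    using R_nonneg[of s] allowed[OF sI] \<tau> by (intro mult_left_mono) auto
  also have "\<dots> \<le> integral {s..t} w"
    unfolding D_def using integral_w_ge_R[OF st \<tau> _ _ S] \<rho> allowed by auto
  finally show ?thesis .
qed

lemma integral_w_split:
  assumes "0 \<le> u" "u \<le> v" "v \<le> L"
  shows "integral {0..u} w + integral {u..v} w + integral {v..L} w = 1"
proof -
  have "integral {0..u} w + integral {u..v} w = integral {0..v} w"
    using assms integrable_continuous_subinterval[OF continuous_w order_refl assms(3)] by (intro Henstock_Kurzweil_Integration.integral_combine) auto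
  moreover have "integral {0..v} w + integral {v..L} w = integral {0..L} w"
    using assms integrable_continuous_subinterval[OF continuous_w order_refl order_refl] by (intro Henstock_Kurzweil_Integration.integral_combine) auto
  ultimately show ?thesis using integral_w by simp
qed

lemma mass_beyond_left_end:
  assumes u: "0 \<le> u" "u \<le> L" "0 < f u" and \<mu>: "\<mu> > 0" and B: "0 \<le> B"
    and left: "u = 0 \<or> (f u \<le> B \<and> (\<forall>x\<in>{0..u}. W' x \<le> - \<mu>))"
  shows "integral {0..u} w \<le> B * R u / \<mu>"
proof (cases "u = 0")
  case False
  with left have "f u \<le> B" "\<forall>x\<in>{0..u}. W' x \<le> - \<mu>" by auto
  then have "\<mu> * integral {0..u} w \<le> Q u" by (intro energy_tail_left[OF u(1,2)]) auto
  also have "\<dots> \<le> B * R u"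
    using \<open>f u \<le> B\<close> Q_eq_f_R[OF u(3)] R_nonneg[OF u(3)] by (simp add: mult_right_mono)
  finally have "\<mu> * integral {0..u} w \<le> B * R u" .
  then show ?thesis using \<mu> by (simp add: field_simps)
qed (use B R_nonneg[OF u(3)] \<mu> in simp)

lemma mass_beyond_right_end:
  assumes v: "0 \<le> v" "v \<le> L" "0 < f v" and \<mu>: "\<mu> > 0" and B: "0 \<le> B"
    and right: "v = L \<or> (f v \<le> B \<and> (\<forall>x\<in>{v..L}. \<mu> \<le> W' x))"
  shows "integral {v..L} w \<le> B * R v / \<mu>"
proof (cases "v = L")
  case False
  with right have "f v \<le> B" "\<forall>x\<in>{v..L}. \<mu> \<le> W' x" by auto
  then have "\<mu> * integral {v..L} w \<le> Q v" by (intro energy_tail_right[OF v(1,2)]) auto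
  also have "\<dots> \<le> B * R v"
    using \<open>f v \<le> B\<close> Q_eq_f_R[OF v(3)] R_nonneg[OF v(3)] by (simp add: mult_right_mono)
  finally have "\<mu> * integral {v..L} w \<le> B * R v" .
  then show ?thesis using \<mu> by (simp add: field_simps)
qed (use B R_nonneg[OF v(3)] \<mu> in simp)

text \<open>Normalisation bounds \<open>R\<close> from below on an allowed interval \<open>[u, v]\<close>: inside,
  \<open>w \<le> R\<close> and \<open>R\<close> is comparable to \<open>R s\<close>; outside, the energy tails bound the mass
  by \<open>Q / \<mu> = f R / \<mu>\<close> at the endpoints.\<close>
lemma one_le_R_mult:
  assumes uv: "0 \<le> u" "u \<le> s" "s \<le> v" "v \<le> L" and \<tau>: "\<tau> > 0" and \<mu>: "\<mu> > 0" and B: "0 \<le> B"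
    and allowed: "\<And>x. x \<in> {u..v} \<Longrightarrow> \<tau> \<le> f x \<and> \<bar>W' x\<bar> \<le> K"
    and left: "u = 0 \<or> (f u \<le> B \<and> (\<forall>x\<in>{0..u}. W' x \<le> - \<mu>))"
    and right: "v = L \<or> (f v \<le> B \<and> (\<forall>x\<in>{v..L}. \<mu> \<le> W' x))"
  shows "1 \<le> R s * (exp (K / \<tau> * L) * (L + 2 * B / \<mu>))"
proof -
  define D where "D = exp (K / \<tau> * L)"
  have sI: "s \<in> {u..v}" and uI: "u \<in> {u..v}" and vI: "v \<in> {u..v}" using uv by auto
  have f_pos: "0 < f x" if "x \<in> {u..v}" for x using allowed[OF that] \<tau> by auto
  have Rs: "0 \<le> R s" by (rule R_nonneg[OF f_pos[OF sI]])
  have R_le: "R x \<le> D * R s" if x: "x \<in> {u..v}" for x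
  proof -
    have "0 \<le> K" using allowed[OF x] by (auto intro: order_trans[OF abs_ge_zero])
    then have "K / \<tau> * (v - u) \<le> K / \<tau> * L" using uv \<tau> by (intro mult_left_mono) auto
    then have "exp (K / \<tau> * (v - u)) * R s \<le> D * R s" using Rs by (intro mult_right_mono) (auto simp: D_def)
    then show ?thesis using R_le_exp_R[OF uv(1) uv(4) \<tau> allowed x sI] by linarith
  qed
  have "integral {0..u} w \<le> B * (D * R s) / \<mu>"
    using mass_beyond_left_end[OF uv(1) _ f_pos[OF uI] \<mu> B left] R_le[OF uI] B \<mu> uv
    by (smt (verit) divide_right_mono mult_left_mono)
  moreover have "integral {v..L} w \<le> B * (D * R s) / \<mu>"
    using mass_beyond_right_end[OF _ uv(4) f_pos[OF vI] \<mu> B right] R_le[OF vI] B \<mu> uv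
    by (smt (verit) divide_right_mono mult_left_mono)
  moreover have "integral {u..v} w \<le> L * (D * R s)"
  proof -
    have "integral {u..v} w \<le> integral {u..v} (\<lambda>x. D * R s)"
      by (rule integral_le) (use integrable_continuous_subinterval[OF continuous_w uv(1) uv(4)] w_le_R f_pos R_le in \<open>force+\<close>)
    also have "\<dots> = (v - u) * (D * R s)" using uv by simp
    also have "\<dots> \<le> L * (D * R s)" using uv Rs by (intro mult_right_mono) (auto simp: D_def)
    finally show ?thesis .
  qed
  ultimately have "1 \<le> B * (D * R s) / \<mu> + L * (D * R s) + B * (D * R s) / \<mu>"
    using integral_w_split[of u v] uv by linarith
  also have "\<dots> = R s * (D * (L + 2 * B / \<mu>))" using \<mu> by (simp add: field_simps)
  finally show ?thesis unfolding D_def .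
qed

lemma window_mass_ge:
  assumes uv: "0 \<le> u" "u \<le> s" "s < t" "t \<le> v" "v \<le> L" and \<tau>: "\<tau> > 0" and \<mu>: "\<mu> > 0" and B: "0 \<le> B"
    and allowed: "\<And>x. x \<in> {u..v} \<Longrightarrow> \<tau> \<le> f x \<and> \<bar>W' x\<bar> \<le> K \<and> \<bar>W x\<bar> \<le> M"
    and left: "u = 0 \<or> (f u \<le> B \<and> (\<forall>x\<in>{0..u}. W' x \<le> - \<mu>))"
    and right: "v = L \<or> (f v \<le> B \<and> (\<forall>x\<in>{v..L}. \<mu> \<le> W' x))"
  defines "D \<equiv> exp (K / \<tau> * (t - s))" and "\<rho> \<equiv> 1 + 4 * M / \<tau>"
  assumes small: "e \<le> (t - s) * sqrt \<tau> / (2 * \<rho> * D\<^sup>2)"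
  shows "(t - s) / (4 * \<rho> * D) / (exp (K / \<tau> * L) * (L + 2 * B / \<mu>)) \<le> integral {s..t} w"
proof -
  define N where "N = exp (K / \<tau> * L) * (L + 2 * B / \<mu>)"
  have "R s * ((t - s) / (4 * \<rho> * D)) \<le> integral {s..t} w"
    unfolding D_def \<rho>_def
    by (rule integral_w_ge_R_small_e) (use uv \<tau> allowed small in \<open>auto simp: D_def \<rho>_def\<close>)
  moreover have "1 \<le> R s * N"
    unfolding N_def by (rule one_le_R_mult[OF uv(1,2) _ uv(5) \<tau> \<mu> B _ left right]) (use uv allowed in auto)
  moreover have "N > 0" using L_pos B \<mu> by (simp add: N_def add_pos_nonneg)
  moreover have "0 \<le> (t - s) / (4 * \<rho> * D)"
  proof -
    have "0 \<le> M" using allowed[of s] uv by (auto intro: order_trans[OF abs_ge_zero])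
    then have "0 < 4 * \<rho> * D" using \<tau> by (simp add: \<rho>_def D_def add_pos_nonneg)
    then show ?thesis using uv by simp
  qed
  ultimately have "(t - s) / (4 * \<rho> * D) * (1 / N) \<le> (t - s) / (4 * \<rho> * D) * R s"
    by (intro mult_left_mono) (auto simp: divide_le_eq mult.commute)
  then show ?thesis
    using \<open>R s * ((t - s) / (4 * \<rho> * D)) \<le> integral {s..t} w\<close> unfolding N_def[symmetric] by (simp add: mult.commute)
qed

text \<open>At a boundary point \<open>w z = 0\<close>, so \<open>e\<^sup>2 p z = Q z = f z R z\<close>, and \<open>R z\<close> is bounded below
  by the mass on an allowed interval containing \<open>z\<close>.\<close>
lemma boundary_p_ge:
  assumes st: "0 \<le> s" "s < t" "t \<le> L" and z: "z = s \<or> z = t" "w z = 0" and \<nu>: "\<nu> > 0"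
    and allowed: "\<And>x. x \<in> {s..t} \<Longrightarrow> \<nu> / 2 \<le> f x \<and> \<bar>W' x\<bar> \<le> K"
    and mass: "{s'..t'} \<subseteq> {s..t}" "C \<le> integral {s'..t'} w"
    and W_bound: "\<bar>W z\<bar> \<le> M"
  shows "C / ((t - s) * exp (K / (\<nu> / 2) * (t - s)) * (1 + 2 * (M + 1) / \<nu>)) \<le> e\<^sup>2 * p z / (\<bar>E\<bar> + 1)"
proof -
  define D c where "D = exp (K / (\<nu> / 2) * (t - s))" and "c = 1 + 2 * (M + 1) / \<nu>"
  have zI: "z \<in> {s..t}" using z st by auto
  have f_pos: "0 < f x" if "x \<in> {s..t}" for x using allowed[OF that] \<nu> by auto
  have Rz: "0 \<le> R z" by (rule R_nonneg[OF f_pos[OF zI]])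
  have "integral {s'..t'} w \<le> integral {s..t} w"
    using mass(1) integrable_continuous_subinterval[OF continuous_w st(1) st(3)]
    by (intro integral_subset_le) (auto simp: w_nonneg intro: integrable_on_subinterval)
  then have "C \<le> integral {s..t} (\<lambda>x. D * R z)"
  proof (rule order_trans[OF order_trans[OF mass(2)] integral_le])
    fix x assume x: "x \<in> {s..t}"
    have "R x \<le> D * R z" unfolding D_def using \<nu> by (intro R_le_exp_R[OF st(1) st(3) _ allowed x zI]) auto
    then show "w x \<le> D * R z" using w_le_R[OF f_pos[OF x]] by linarith
  qed (use integrable_continuous_subinterval[OF continuous_w st(1) st(3)] in auto)
  also have "\<dots> = R z * ((t - s) * D)" using st by simp
  finally have "C / ((t - s) * D) \<le> R z"
    using st by (simp add: D_def pos_divide_le_eq)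
  moreover have "0 \<le> M" using W_bound by (auto intro: order_trans[OF abs_ge_zero])
  then have c: "c > 0" using \<nu> by (simp add: c_def add_pos_nonneg)
  ultimately have "C / ((t - s) * D * c) \<le> R z / c"
    by (simp add: divide_right_mono flip: divide_divide_eq_left)
  also have "\<dots> = f z * R z / (f z * c)" using f_pos[OF zI] by simp
  also have "\<dots> \<le> f z * R z / (\<bar>E\<bar> + 1)"
  proof (rule divide_left_mono)
    have "0 \<le> M" using W_bound by (auto intro: order_trans[OF abs_ge_zero])
    then have "(M + 1) * 1 \<le> (M + 1) * (f z * 2 / \<nu>)"
      using allowed[OF zI] \<nu> by (intro mult_left_mono) (auto simp: field_simps)
    moreover have "\<bar>E\<bar> \<le> f z + M" using W_bound f_pos[OF zI] unfolding f_def by (auto simp: abs_le_iff)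
    ultimately show "\<bar>E\<bar> + 1 \<le> f z * c" by (simp add: c_def field_simps)
  qed (use f_pos[OF zI] Rz c in auto)
  also have "f z * R z = e\<^sup>2 * p z" using Q_eq_f_R[OF f_pos[OF zI]] z(2) by (simp add: Q_def)
  finally show ?thesis unfolding D_def c_def .
qed

end

section \<open>The single-well potential\<close>

locale single_well =
  fixes L x0 :: real and V V' :: "real \<Rightarrow> real"
  assumes L_pos: "0 < L"
    and V_deriv: "\<And>x. x \<in> {0..L} \<Longrightarrow> (V has_real_derivative V' x) (at x within {0..L})"
    and V'_cont: "continuous_on {0..L} V'"
    and crit: "\<forall>x\<in>{0..L}. V' x = 0 \<longleftrightarrow> x = x0"
    and x0_in: "0 < x0" "x0 < L"
    and x0_min: "\<forall>x\<in>{0..L}. V x0 \<le> V x"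
begin

lemma V_cont: "continuous_on {0..L} V"
  using V_deriv by (meson DERIV_continuous continuous_on_eq_continuous_within)

lemma bounded_V: "\<exists>M. \<forall>x\<in>{0..L}. \<bar>V x\<bar> \<le> M"
  using compact_imp_bounded[OF compact_continuous_image[OF V_cont compact_Icc]] by (auto simp: bounded_real)

lemma bounded_V': "\<exists>K. \<forall>x\<in>{0..L}. \<bar>V' x\<bar> \<le> K"
  using compact_imp_bounded[OF compact_continuous_image[OF V'_cont compact_Icc]] by (auto simp: bounded_real)

lemma V_mvt:
  assumes "0 \<le> x" "x < z" "z \<le> L"
  shows "\<exists>\<xi>\<in>{x<..<z}. V z - V x = V' \<xi> * (z - x)"
proof -
  have "(V has_derivative (\<lambda>h. V' \<xi> * h)) (at \<xi> within {x..z})" if "x \<le> \<xi>" "\<xi> \<le> z" for \<xi>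
    using has_field_derivative_subset[OF V_deriv, of \<xi> "{x..z}"] assms that
    unfolding has_field_derivative_def by auto
  from mvt_simple[OF \<open>x < z\<close> this] show ?thesis by auto
qed

lemma V_diff_ge:
  assumes "0 \<le> x" "x \<le> z" "z \<le> L" and slope: "\<And>u. u \<in> {x..z} \<Longrightarrow> m \<le> V' u"
  shows "m * (z - x) \<le> V z - V x"
proof (cases "x = z")
  case False
  then obtain \<xi> where "\<xi> \<in> {x<..<z}" "V z - V x = V' \<xi> * (z - x)" using V_mvt assms by force
  then show ?thesis using slope[of \<xi>] assms by (simp add: mult_right_mono)
qed simp

lemma V_diff_le:
  assumes "0 \<le> x" "x \<le> z" "z \<le> L" and slope: "\<And>u. u \<in> {x..z} \<Longrightarrow> V' u \<le> - m"
  shows "m * (z - x) \<le> V x - V z"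
proof (cases "x = z")
  case False
  then obtain \<xi> where \<xi>: "\<xi> \<in> {x<..<z}" "V z - V x = V' \<xi> * (z - x)" using V_mvt assms by force
  have "V' \<xi> * (z - x) \<le> - m * (z - x)" using slope[of \<xi>] \<xi> assms by (intro mult_right_mono) auto
  then show ?thesis using \<xi> by linarith
qed simp

lemma sign_change_brackets_x0:
  assumes "0 \<le> u" "u \<le> v" "v \<le> L" and "V' u \<le> 0 \<and> 0 \<le> V' v \<or> V' v \<le> 0 \<and> 0 \<le> V' u"
  shows "u \<le> x0 \<and> x0 \<le> v"
proof -
  have "continuous_on {u..v} V'" using continuous_on_subset[OF V'_cont] assms by auto
  then obtain z where "u \<le> z" "z \<le> v" "V' z = 0"
    using IVT'[of V' u 0 v] IVT2'[of V' v 0 u] assms by blast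
  then show ?thesis using crit assms by force
qed

lemma V'_pos_right:
  assumes "x0 < x" "x \<le> L" shows "0 < V' x"
proof (rule ccontr)
  assume x: "\<not> 0 < V' x"
  obtain \<xi> where \<xi>: "\<xi> \<in> {x0<..<x}" "V x - V x0 = V' \<xi> * (x - x0)"
    using V_mvt[of x0 x] x0_in assms by auto
  have "V' \<xi> < 0"
  proof (rule ccontr)
    assume "\<not> V' \<xi> < 0"
    then have "\<xi> \<le> x0" using sign_change_brackets_x0[of \<xi> x] \<xi> x assms x0_in by auto
    then show False using \<xi> by auto
  qed
  then have "V' \<xi> * (x - x0) < 0" using assms by (simp add: mult_neg_pos)
  moreover have "V x0 \<le> V x" using x0_min assms x0_in by auto
  ultimately show False using \<xi> by linarith
qed

lemma V'_neg_left:
  assumes "0 \<le> x" "x < x0" shows "V' x < 0"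
proof (rule ccontr)
  assume x: "\<not> V' x < 0"
  obtain \<xi> where \<xi>: "\<xi> \<in> {x<..<x0}" "V x0 - V x = V' \<xi> * (x0 - x)"
    using V_mvt[of x x0] x0_in assms by auto
  have "0 < V' \<xi>"
  proof (rule ccontr)
    assume "\<not> 0 < V' \<xi>"
    then have "x0 \<le> \<xi>" using sign_change_brackets_x0[of x \<xi>] \<xi> x assms x0_in by auto
    then show False using \<xi> by auto
  qed
  then have "0 < V' \<xi> * (x0 - x)" using assms by simp
  moreover have "V x0 \<le> V x" using x0_min assms x0_in by auto
  ultimately show False using \<xi> by linarith
qed

lemma V'_nonneg_right: "x0 \<le> x \<Longrightarrow> x \<le> L \<Longrightarrow> 0 \<le> V' x"
  using V'_pos_right[of x] crit x0_in by (cases "x = x0") auto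

lemma V'_nonpos_left: "0 \<le> x \<Longrightarrow> x \<le> x0 \<Longrightarrow> V' x \<le> 0"
  using V'_neg_left[of x] crit x0_in by (cases "x = x0") auto

lemma V_mono_right: "x0 \<le> x \<Longrightarrow> x \<le> z \<Longrightarrow> z \<le> L \<Longrightarrow> V x \<le> V z"
  using V_diff_ge[of x z 0] V'_nonneg_right x0_in by simp

lemma V_antimono_left: "0 \<le> x \<Longrightarrow> x \<le> z \<Longrightarrow> z \<le> x0 \<Longrightarrow> V z \<le> V x"
  using V_diff_le[of x z 0] V'_nonpos_left x0_in by simp

lemma uniform_slope:
  assumes "\<eta> > 0"
  shows "\<exists>m>0. (\<forall>x\<in>{x0 + \<eta>..L}. m \<le> V' x) \<and> (\<forall>x\<in>{0..x0 - \<eta>}. V' x \<le> - m)"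
proof -
  have "\<exists>m>0. \<forall>x\<in>{x0 + \<eta>..L}. m \<le> V' x"
  proof (cases "x0 + \<eta> \<le> L")
    case True
    moreover have "continuous_on {x0 + \<eta>..L} V'" using continuous_on_subset[OF V'_cont] x0_in assms by auto
    ultimately obtain x where "x \<in> {x0 + \<eta>..L}" "\<forall>y\<in>{x0 + \<eta>..L}. V' x \<le> V' y"
      using continuous_attains_inf[OF compact_Icc] by (metis atLeastatMost_empty_iff)
    then show ?thesis using V'_pos_right[of x] assms by auto
  qed (auto intro: exI[of _ 1])
  moreover have "\<exists>m>0. \<forall>x\<in>{0..x0 - \<eta>}. V' x \<le> - m"
  proof (cases "0 \<le> x0 - \<eta>")
    case True
    moreover have "continuous_on {0..x0 - \<eta>} V'" using continuous_on_subset[OF V'_cont] x0_in assms by auto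
    ultimately obtain x where "x \<in> {0..x0 - \<eta>}" "\<forall>y\<in>{0..x0 - \<eta>}. V' y \<le> V' x"
      using continuous_attains_sup[OF compact_Icc] by (metis atLeastatMost_empty_iff)
    then show ?thesis using V'_neg_left[of x] assms by (intro exI[of _ "- V' x"]) auto
  qed (auto intro: exI[of _ 1])
  ultimately obtain m1 m2 where "m1 > 0" "m2 > 0"
    "\<forall>x\<in>{x0 + \<eta>..L}. m1 \<le> V' x" "\<forall>x\<in>{0..x0 - \<eta>}. V' x \<le> - m2" by blast
  then show ?thesis by (intro exI[of _ "min m1 m2"]) force
qed

lemma V_gap:
  assumes r: "r > 0"
  shows "\<exists>d>0. \<forall>x\<in>{0..L}. r \<le> \<bar>x - x0\<bar> \<longrightarrow> V x0 + d \<le> V x"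
proof -
  obtain m where m: "m > 0" "\<forall>x\<in>{x0 + r/2..L}. m \<le> V' x" "\<forall>x\<in>{0..x0 - r/2}. V' x \<le> - m"
    using uniform_slope[of "r/2"] r by auto
  have "V x0 + m * (r/2) \<le> V x" if x: "x \<in> {0..L}" "r \<le> \<bar>x - x0\<bar>" for x
  proof (cases "x0 \<le> x")
    case True
    then have "m * (x - (x0 + r/2)) \<le> V x - V (x0 + r/2)"
      using x r m x0_in by (intro V_diff_ge) auto
    moreover have "V x0 \<le> V (x0 + r/2)" using x0_min True x r x0_in by auto
    moreover have "m * (r/2) \<le> m * (x - (x0 + r/2))" using True x m by (intro mult_left_mono) auto
    ultimately show ?thesis by linarith
  next
    case False
    then have "m * (x0 - r/2 - x) \<le> V x - V (x0 - r/2)"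
      using x r m x0_in by (intro V_diff_le) auto
    moreover have "V x0 \<le> V (x0 - r/2)" using x0_min False x r x0_in by auto
    moreover have "m * (r/2) \<le> m * (x0 - r/2 - x)" using False x m by (intro mult_left_mono) auto
    ultimately show ?thesis by linarith
  qed
  then show ?thesis using m r by (intro exI[of _ "m * (r/2)"]) auto
qed

lemma V_continuous_at:
  assumes "z \<in> {0..L}" "r > 0"
  obtains d where "d > 0" "\<And>x. x \<in> {0..L} \<Longrightarrow> \<bar>x - z\<bar> < d \<Longrightarrow> \<bar>V x - V z\<bar> < r"
  using V_cont[unfolded continuous_on_iff dist_real_def, rule_format, OF assms] by blast

lemma V_near_min:
  assumes r: "r > 0"
  shows "\<exists>\<eta>>0. \<eta> \<le> x0 \<and> x0 + \<eta> \<le> L \<and> (\<forall>x. \<bar>x - x0\<bar> \<le> \<eta> \<longrightarrow> V x < V x0 + r)"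
proof -
  obtain d where d: "d > 0" "\<And>x. x \<in> {0..L} \<Longrightarrow> \<bar>x - x0\<bar> < d \<Longrightarrow> \<bar>V x - V x0\<bar> < r"
    using V_continuous_at[of x0 r] r x0_in by auto
  define \<eta> where "\<eta> = min (d/2) (min x0 (L - x0))"
  have "V x < V x0 + r" if x: "\<bar>x - x0\<bar> \<le> \<eta>" for x
  proof -
    have "x \<in> {0..L}" "\<bar>x - x0\<bar> < d" using x d(1) by (auto simp: \<eta>_def abs_le_iff)
    then show ?thesis using d(2) by fastforce
  qed
  then show ?thesis using d x0_in by (intro exI[of _ \<eta>]) (auto simp: \<eta>_def)
qed

lemma V_near_endpoints:
  assumes r: "r > 0"
  shows "\<exists>b>0. b \<le> L \<and> (\<forall>z\<in>{0, L}. \<forall>x\<in>{0..L}. \<bar>x - z\<bar> \<le> b \<longrightarrow> \<bar>V x - V z\<bar> < r)"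
proof -
  obtain d0 where d0: "d0 > 0" "\<And>x. x \<in> {0..L} \<Longrightarrow> \<bar>x - 0\<bar> < d0 \<Longrightarrow> \<bar>V x - V 0\<bar> < r"
    using V_continuous_at[of 0 r] r L_pos by auto
  obtain dL where dL: "dL > 0" "\<And>x. x \<in> {0..L} \<Longrightarrow> \<bar>x - L\<bar> < dL \<Longrightarrow> \<bar>V x - V L\<bar> < r"
    using V_continuous_at[of L r] r L_pos by auto
  define b where "b = min L (min d0 dL / 2)"
  have "b > 0" "b \<le> L" "b < d0" "b < dL" using d0 dL L_pos by (auto simp: b_def)
  then show ?thesis using d0(2) dL(2) by (intro exI[of _ b]) force
qed

lemma sublevel_right:
  assumes "V x0 \<le> c"
  shows "\<exists>v. x0 \<le> v \<and> v \<le> L \<and> (\<forall>x\<in>{x0..v}. V x \<le> c) \<and> (v = L \<or> V v = c)"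
proof (cases "V L \<le> c")
  case True
  then show ?thesis using V_mono_right x0_in by (intro exI[of _ L]) force
next
  case False
  then obtain v where "x0 \<le> v" "v \<le> L" "V v = c"
    using IVT'[of V x0 c L] assms x0_in continuous_on_subset[OF V_cont, of "{x0..L}"] by force
  then show ?thesis using V_mono_right by (intro exI[of _ v]) force
qed

lemma sublevel_left:
  assumes "V x0 \<le> c"
  shows "\<exists>u. 0 \<le> u \<and> u \<le> x0 \<and> (\<forall>x\<in>{u..x0}. V x \<le> c) \<and> (u = 0 \<or> V u = c)"
proof (cases "V 0 \<le> c")
  case True
  then show ?thesis using V_antimono_left x0_in by (intro exI[of _ 0]) force
next
  case False
  then obtain u where "0 \<le> u" "u \<le> x0" "V u = c"
    using IVT2'[of V x0 c 0] assms x0_in continuous_on_subset[OF V_cont, of "{0..x0}"] by force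
  then show ?thesis using V_antimono_left by (intro exI[of _ u]) force
qed

lemma sublevel_interval:
  assumes \<eta>: "0 \<le> \<eta>" "\<eta> \<le> x0" "x0 + \<eta> \<le> L" "\<forall>x. \<bar>x - x0\<bar> \<le> \<eta> \<longrightarrow> V x < c"
  shows "\<exists>u v. 0 \<le> u \<and> u \<le> x0 - \<eta> \<and> x0 + \<eta> \<le> v \<and> v \<le> L \<and> (\<forall>x\<in>{u..v}. V x \<le> c) \<and>
    (u = 0 \<or> V u = c) \<and> (v = L \<or> V v = c)"
proof -
  have c: "V x0 \<le> c" using \<eta>(1) \<eta>(4)[rule_format, of x0] by simp
  obtain u where u: "0 \<le> u" "u \<le> x0" "\<forall>x\<in>{u..x0}. V x \<le> c" "u = 0 \<or> V u = c"
    using sublevel_left[OF c] by blast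
  obtain v where v: "x0 \<le> v" "v \<le> L" "\<forall>x\<in>{x0..v}. V x \<le> c" "v = L \<or> V v = c"
    using sublevel_right[OF c] by blast
  have "u \<le> x0 - \<eta>"
  proof (rule ccontr)
    assume "\<not> u \<le> x0 - \<eta>"
    then have "V u = c" "\<bar>u - x0\<bar> \<le> \<eta>" using u \<eta> by auto
    then show False using \<eta>(4) by force
  qed
  moreover have "x0 + \<eta> \<le> v"
  proof (rule ccontr)
    assume "\<not> x0 + \<eta> \<le> v"
    then have "V v = c" "\<bar>v - x0\<bar> \<le> \<eta>" using v \<eta> by auto
    then show False using \<eta>(4) by force
  qed
  moreover have "V x \<le> c" if "x \<in> {u..v}" for x using u(3) v(3) that by (cases "x \<le> x0") auto
  ultimately show ?thesis using u v by blast
qed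

lemma well_shape_constants:
  assumes \<nu>: "\<nu> > 0"
  shows "\<exists>\<delta> \<eta> m. 0 < \<delta> \<and> \<delta> \<le> 1 \<and> (\<forall>x\<in>{0..L}. \<nu> / 3 \<le> \<bar>x - x0\<bar> \<longrightarrow> V x0 + 4 * \<delta> \<le> V x) \<and>
    0 < \<eta> \<and> \<eta> \<le> x0 \<and> x0 + \<eta> \<le> L \<and> (\<forall>x. \<bar>x - x0\<bar> \<le> \<eta> \<longrightarrow> V x < V x0 + \<delta> / 4) \<and>
    0 < m \<and> m \<le> 1 \<and> (\<forall>x\<in>{x0 + \<eta>..L}. m \<le> V' x) \<and> (\<forall>x\<in>{0..x0 - \<eta>}. V' x \<le> - m)"
proof -
  obtain d where d: "d > 0" "\<forall>x\<in>{0..L}. \<nu> / 3 \<le> \<bar>x - x0\<bar> \<longrightarrow> V x0 + d \<le> V x"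
    using V_gap[of "\<nu> / 3"] \<nu> by auto
  define \<delta> where "\<delta> = min 1 (d / 4)"
  have \<delta>: "0 < \<delta>" "\<delta> \<le> 1" "4 * \<delta> \<le> d" using d by (auto simp: \<delta>_def)
  obtain \<eta> where \<eta>: "\<eta> > 0" "\<eta> \<le> x0" "x0 + \<eta> \<le> L" "\<forall>x. \<bar>x - x0\<bar> \<le> \<eta> \<longrightarrow> V x < V x0 + \<delta> / 4"
    using V_near_min[of "\<delta> / 4"] \<delta> by auto
  obtain m where m: "m > 0" "\<forall>x\<in>{x0 + \<eta>..L}. m \<le> V' x" "\<forall>x\<in>{0..x0 - \<eta>}. V' x \<le> - m"
    using uniform_slope[OF \<eta>(1)] by auto
  have "\<forall>x\<in>{x0 + \<eta>..L}. min 1 m \<le> V' x" "\<forall>x\<in>{0..x0 - \<eta>}. V' x \<le> - min 1 m"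
    using m by force+
  moreover have "\<forall>x\<in>{0..L}. \<nu> / 3 \<le> \<bar>x - x0\<bar> \<longrightarrow> V x0 + 4 * \<delta> \<le> V x"
    using d(2) \<delta>(3) by force
  moreover have "0 < min 1 m" "min 1 m \<le> 1" using m(1) by auto
  ultimately show ?thesis using \<delta> \<eta> by blast
qed

text \<open>A point \<open>y\<close> with \<open>V y\<close> barely above the level of the sublevel interval \<open>[u, v]\<close> lies
  close to it, because \<open>V\<close> has slope at least \<open>m\<close> beyond \<open>x0 \<plusminus> \<eta>\<close>.\<close>
lemma window_near_point:
  assumes \<nu>: "\<nu> > 0" and m: "m > 0" and l: "0 < l" "l \<le> \<eta>" "l \<le> \<nu> / 4"
    and uv: "0 \<le> u" "u \<le> x0 - \<eta>" "x0 + \<eta> \<le> v" "v \<le> L"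
    and slope: "\<forall>x\<in>{x0 + \<eta>..L}. m \<le> V' x" "\<forall>x\<in>{0..x0 - \<eta>}. V' x \<le> - m"
    and ends: "u = 0 \<or> V u = c" "v = L \<or> V v = c"
    and y: "y \<in> {0..L}" "V y \<le> c + m * \<nu> / 4"
  shows "\<exists>s. u \<le> s \<and> s + l \<le> v \<and> {s..s + l} \<subseteq> {y - \<nu><..<y + \<nu>}"
proof -
  consider "v < y" | "y < u" | "u \<le> y" "y \<le> v" by linarith
  then show ?thesis
  proof cases
    case 1
    then have "V v = c" using ends y by auto
    moreover have "m * (y - v) \<le> V y - V v" using 1 uv y slope l x0_in by (intro V_diff_ge) auto
    ultimately have "m * (y - v) \<le> m * (\<nu> / 4)" using y by simp
    then have "y - v \<le> \<nu> / 4" using m by simp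
    then show ?thesis using 1 l uv \<nu> by (intro exI[of _ "v - l"]) auto
  next
    case 2
    then have "V u = c" using ends y by auto
    moreover have "m * (u - y) \<le> V y - V u" using 2 uv y slope l x0_in by (intro V_diff_le) auto
    ultimately have "m * (u - y) \<le> m * (\<nu> / 4)" using y by simp
    then have "u - y \<le> \<nu> / 4" using m by simp
    then show ?thesis using 2 l uv \<nu> by (intro exI[of _ u]) auto
  next
    case 3
    show ?thesis
    proof (cases "y + l \<le> v")
      case True
      then show ?thesis using 3 l \<nu> by (intro exI[of _ y]) auto
    next
      case False
      then show ?thesis using 3 l uv \<nu> by (intro exI[of _ "y - l"]) auto
    qed
  qed
qed

end

section \<open>Mass near a point and flux through the boundary\<close>

locale single_well_eigenfunction =
  single_well L x0 V V' + dirichlet_eigenfunction L e E W W' a b a' b'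
  for L x0 :: real and V V' :: "real \<Rightarrow> real" and e E :: real and W W' a b a' b' :: "real \<Rightarrow> real"
begin

lemma boundary_p_ge_of_mass:
  assumes z: "z \<in> {0, L}" and \<nu>: "\<nu> > 0" and r: "0 < r" "r \<le> L"
    and near: "\<forall>x\<in>{0..L}. \<bar>x - z\<bar> \<le> r \<longrightarrow> \<bar>V x - V z\<bar> < \<nu> / 4"
    and close: "\<forall>x\<in>{0..L}. \<bar>W x - V x\<bar> < \<nu> / 4 \<and> \<bar>W' x - V' x\<bar> < 1"
    and K: "\<forall>x\<in>{0..L}. \<bar>V' x\<bar> \<le> K" and M: "\<forall>x\<in>{0..L}. \<bar>V x\<bar> \<le> M"
    and Ez: "V z + \<nu> \<le> E"
    and window: "{s..t} \<subseteq> {z - r<..<z + r} \<inter> {0..L}" "C \<le> integral {s..t} w"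
  shows "C / (r * exp ((K + 1) / (\<nu> / 2) * r) * (1 + 2 * ((M + \<nu>) + 1) / \<nu>)) \<le> e\<^sup>2 * p z / (\<bar>E\<bar> + 1)"
proof -
  define u where "u = (if z = 0 then 0 else L - r)"
  have u: "0 \<le> u" "u < u + r" "u + r \<le> L" "z = u \<or> z = u + r" using z r by (auto simp: u_def)
  have zI: "z \<in> {0..L}" using z L_pos by auto
  have "{s..t} \<subseteq> {u..u + r}" using window(1) z by (auto simp: u_def subset_iff)
  moreover have "\<nu> / 2 \<le> f x \<and> \<bar>W' x\<bar> \<le> K + 1" if x: "x \<in> {u..u + r}" for x
  proof -
    have "x \<in> {0..L}" "\<bar>x - z\<bar> \<le> r" using x u z by (auto simp: u_def)
    then have "\<bar>W x - V x\<bar> < \<nu> / 4" "\<bar>W' x - V' x\<bar> < 1" "\<bar>V' x\<bar> \<le> K" "\<bar>V x - V z\<bar> < \<nu> / 4"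
      using close K near by auto
    then show ?thesis using Ez unfolding f_def abs_less_iff abs_le_iff by (intro conjI) linarith+
  qed
  moreover have "\<bar>W z\<bar> \<le> M + \<nu>"
  proof -
    have "\<bar>V z\<bar> \<le> M" "\<bar>W z - V z\<bar> < \<nu> / 4" using M close zI by auto
    then show ?thesis by linarith
  qed
  moreover have "w z = 0" using z w_boundary by auto
  ultimately have "C / ((u + r - u) * exp ((K + 1) / (\<nu> / 2) * (u + r - u)) * (1 + 2 * ((M + \<nu>) + 1) / \<nu>))
      \<le> e\<^sup>2 * p z / (\<bar>E\<bar> + 1)"
    using boundary_p_ge[OF u(1-4) _ \<nu> _ _ window(2)] by blast
  then show ?thesis by simp
qed

context
  fixes \<nu> \<delta> :: real
  assumes \<nu>: "\<nu> > 0" and \<delta>: "0 < \<delta>" "\<delta> \<le> 1"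
    and gap: "\<forall>x\<in>{0..L}. \<nu> / 3 \<le> \<bar>x - x0\<bar> \<longrightarrow> V x0 + 4 * \<delta> \<le> V x"
    and close: "\<forall>x\<in>{0..L}. \<bar>W x - V x\<bar> \<le> \<delta>"
    and low: "E \<le> V x0 + \<delta>"
    and small: "e \<le> \<nu> * \<delta> / 18"
begin

lemma low_energy_forbidden:
  assumes "x \<in> {0..L}" "\<nu> / 3 \<le> \<bar>x - x0\<bar>"
  shows "f x \<le> - (2 * \<delta>)"
proof -
  have "V x0 + 4 * \<delta> \<le> V x" "\<bar>W x - V x\<bar> \<le> \<delta>" using gap close assms by auto
  then show ?thesis using low unfolding f_def abs_le_iff by linarith
qed

lemma low_energy_agmon_bound:
  assumes x: "x \<in> {0..L}"
  shows "e\<^sup>2 * w x / (2 * (2 * \<delta>) * (\<nu> / 6)) \<le> 1 / 4"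
proof -
  have "f x \<le> 2 * \<delta>" if "x \<in> {0..L}" for x
  proof -
    have "V x0 \<le> V x" "\<bar>W x - V x\<bar> \<le> \<delta>" using x0_min close that by auto
    then show ?thesis using low unfolding f_def abs_le_iff by linarith
  qed
  then have "w x \<le> (1 + 2 * \<delta>) / e" by (rule w_le_of_f_le) (use x in auto)
  also have "\<dots> \<le> 3 / e" using \<delta> e_pos by (simp add: divide_right_mono)
  finally have "e\<^sup>2 * w x / (2 * (2 * \<delta>) * (\<nu> / 6)) \<le> e\<^sup>2 * (3 / e) / (2 * (2 * \<delta>) * (\<nu> / 6))"
    using \<delta> \<nu> by (intro divide_right_mono mult_left_mono) auto
  also have "\<dots> = 9 * e / (2 * \<nu> * \<delta>)" using e_pos by (simp add: field_simps power2_eq_square)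
  also have "\<dots> \<le> 1 / 4" using small \<nu> \<delta> e_pos by (simp add: field_simps)
  finally show ?thesis .
qed

lemma low_energy_tail_right: "integral {min L (x0 + \<nu> / 2)..L} w \<le> 1 / 4"
proof (cases "x0 + \<nu> / 2 < L")
  case True
  then have "integral {x0 + \<nu> / 2..L} w \<le> e\<^sup>2 * w (x0 + \<nu> / 3) / (2 * (2 * \<delta>) * (x0 + \<nu> / 2 - (x0 + \<nu> / 3)))"
    by (intro agmon_tail_right) (use x0_in \<nu> \<delta> low_energy_forbidden in auto)
  also have "x0 + \<nu> / 2 - (x0 + \<nu> / 3) = \<nu> / 6" by simp
  finally show ?thesis using low_energy_agmon_bound[of "x0 + \<nu> / 3"] True x0_in \<nu> by auto
qed simp

lemma low_energy_tail_left: "integral {0..max 0 (x0 - \<nu> / 2)} w \<le> 1 / 4"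
proof (cases "0 < x0 - \<nu> / 2")
  case True
  then have "integral {0..x0 - \<nu> / 2} w \<le> e\<^sup>2 * w (x0 - \<nu> / 3) / (2 * (2 * \<delta>) * (x0 - \<nu> / 3 - (x0 - \<nu> / 2)))"
    by (intro agmon_tail_left) (use x0_in \<nu> \<delta> low_energy_forbidden in auto)
  also have "x0 - \<nu> / 3 - (x0 - \<nu> / 2) = \<nu> / 6" by simp
  finally show ?thesis using low_energy_agmon_bound[of "x0 - \<nu> / 3"] True x0_in \<nu> by auto
qed simp

text \<open>At energies near the bottom of the well the solution concentrates within \<open>\<nu> / 2\<close>
  of \<open>x0\<close>, while every admissible \<open>y\<close> lies within \<open>\<nu> / 3\<close> of \<open>x0\<close>.\<close>
lemma mass_near_point_low_energy:
  assumes y: "y \<in> {0..L}" "V y \<le> E + \<delta>"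
  shows "\<exists>s t. s < t \<and> {s..t} \<subseteq> {y - \<nu><..<y + \<nu>} \<inter> {0..L} \<and> 1 / 2 \<le> integral {s..t} w"
proof -
  define lo hi where "lo = max 0 (x0 - \<nu> / 2)" and "hi = min L (x0 + \<nu> / 2)"
  have lohi: "0 \<le> lo" "lo < hi" "hi \<le> L" using x0_in \<nu> by (auto simp: lo_def hi_def)
  have "1 / 2 \<le> integral {lo..hi} w"
    using integral_w_split[of lo hi] lohi low_energy_tail_left low_energy_tail_right
    unfolding lo_def hi_def by linarith
  moreover have "\<bar>y - x0\<bar> < \<nu> / 3" using gap y low \<delta> by force
  then have "x0 - \<nu> / 3 < y" "y < x0 + \<nu> / 3" by linarith+
  then have "{lo..hi} \<subseteq> {y - \<nu><..<y + \<nu>} \<inter> {0..L}" using lohi by (auto simp: lo_def hi_def)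
  ultimately show ?thesis using lohi by blast
qed

end

context
  fixes \<nu> \<delta> \<eta> m tz K M :: real
  assumes \<nu>: "\<nu> > 0" and \<delta>: "0 < \<delta>" "\<delta> \<le> 1" and m: "0 < m" "m \<le> 1"
    and tz: "0 < tz" "tz \<le> \<delta> / 2" "tz \<le> m * \<nu> / 8"
    and \<eta>: "\<eta> > 0" "\<eta> \<le> x0" "x0 + \<eta> \<le> L" "\<forall>x. \<bar>x - x0\<bar> \<le> \<eta> \<longrightarrow> V x < V x0 + \<delta> / 4"
    and slope: "\<forall>x\<in>{x0 + \<eta>..L}. m \<le> V' x" "\<forall>x\<in>{0..x0 - \<eta>}. V' x \<le> - m"
    and K: "\<forall>x\<in>{0..L}. \<bar>V' x\<bar> \<le> K" and M: "\<forall>x\<in>{0..L}. \<bar>V x\<bar> \<le> M"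
    and close: "\<forall>x\<in>{0..L}. \<bar>W x - V x\<bar> \<le> tz / 2 \<and> \<bar>W' x - V' x\<bar> \<le> m / 2"
begin

lemma high_energy_allowed:
  assumes "x \<in> {0..L}" "V x \<le> E - tz"
  shows "tz / 2 \<le> f x \<and> \<bar>W' x\<bar> \<le> K + 1 \<and> \<bar>W x\<bar> \<le> M + 1"
proof -
  have "\<bar>W x - V x\<bar> \<le> tz / 2" "\<bar>W' x - V' x\<bar> \<le> m / 2" "\<bar>V' x\<bar> \<le> K" "\<bar>V x\<bar> \<le> M"
    using close K M assms by auto
  then show ?thesis using assms m tz \<delta> unfolding f_def abs_le_iff by (intro conjI) linarith+
qed

lemma high_energy_left_end:
  assumes u: "0 \<le> u" "u \<le> x0 - \<eta>" "V u = E - tz"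
  shows "f u \<le> 3 * (tz / 2) \<and> (\<forall>x\<in>{0..u}. W' x \<le> - (m / 2))"
proof (intro conjI ballI)
  have "u \<in> {0..L}" using u \<eta> x0_in by auto
  then have "\<bar>W u - V u\<bar> \<le> tz / 2" using close by auto
  then show "f u \<le> 3 * (tz / 2)" using u unfolding f_def abs_le_iff by linarith
  fix x assume "x \<in> {0..u}"
  then have "x \<in> {0..L}" "x \<in> {0..x0 - \<eta>}" using u x0_in \<eta> by auto
  then have "V' x \<le> - m" "\<bar>W' x - V' x\<bar> \<le> m / 2" using slope(2) close by auto
  then show "W' x \<le> - (m / 2)" unfolding abs_le_iff by linarith
qed

lemma high_energy_right_end:
  assumes v: "x0 + \<eta> \<le> v" "v \<le> L" "V v = E - tz"
  shows "f v \<le> 3 * (tz / 2) \<and> (\<forall>x\<in>{v..L}. m / 2 \<le> W' x)"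
proof (intro conjI ballI)
  have "v \<in> {0..L}" using v \<eta> x0_in by auto
  then have "\<bar>W v - V v\<bar> \<le> tz / 2" using close by auto
  then show "f v \<le> 3 * (tz / 2)" using v unfolding f_def abs_le_iff by linarith
  fix x assume "x \<in> {v..L}"
  then have "x \<in> {0..L}" "x \<in> {x0 + \<eta>..L}" using v \<eta> x0_in by auto
  then have "m \<le> V' x" "\<bar>W' x - V' x\<bar> \<le> m / 2" using slope(1) close by auto
  then show "m / 2 \<le> W' x" unfolding abs_le_iff by linarith
qed

text \<open>Above the bottom of the well, the sublevel interval of \<open>V\<close> at height \<open>E - tz\<close> is
  classically allowed for \<open>W\<close>, and beyond its ends \<open>W\<close> keeps a slope of definite sign.\<close>
lemma mass_near_point_high_energy:
  assumes high: "V x0 + \<delta> \<le> E" and y: "y \<in> {0..L}" "V y \<le> E + tz"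
    and small: "e \<le> min (\<nu> / 4) \<eta> * sqrt (tz / 2) /
      (2 * (1 + 4 * (M + 1) / (tz / 2)) * (exp ((K + 1) / (tz / 2) * min (\<nu> / 4) \<eta>))\<^sup>2)"
  shows "\<exists>s t. s < t \<and> {s..t} \<subseteq> {y - \<nu><..<y + \<nu>} \<inter> {0..L} \<and>
    min (\<nu> / 4) \<eta> / (4 * (1 + 4 * (M + 1) / (tz / 2)) * exp ((K + 1) / (tz / 2) * min (\<nu> / 4) \<eta>)) /
      (exp ((K + 1) / (tz / 2) * L) * (L + 2 * (3 * (tz / 2)) / (m / 2))) \<le> integral {s..t} w"
proof -
  define l where "l = min (\<nu> / 4) \<eta>"
  have l: "0 < l" "l \<le> \<eta>" "l \<le> \<nu> / 4" using \<nu> \<eta> by (auto simp: l_def)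
  have "\<forall>x. \<bar>x - x0\<bar> \<le> \<eta> \<longrightarrow> V x < E - tz" using \<eta>(4) high tz by force
  then obtain u v where uv: "0 \<le> u" "u \<le> x0 - \<eta>" "x0 + \<eta> \<le> v" "v \<le> L"
      and sub: "\<forall>x\<in>{u..v}. V x \<le> E - tz" and ends: "u = 0 \<or> V u = E - tz" "v = L \<or> V v = E - tz"
    using sublevel_interval[OF less_imp_le[OF \<eta>(1)] \<eta>(2,3)] by blast
  obtain s where s: "u \<le> s" "s + l \<le> v" "{s..s + l} \<subseteq> {y - \<nu><..<y + \<nu>}"
    using window_near_point[OF \<nu> m(1) l uv slope ends y(1)] y(2) tz by (auto simp: algebra_simps)
  have "(s + l) - s = l" by simp
  have "l / (4 * (1 + 4 * (M + 1) / (tz / 2)) * exp ((K + 1) / (tz / 2) * l)) /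
      (exp ((K + 1) / (tz / 2) * L) * (L + 2 * (3 * (tz / 2)) / (m / 2))) \<le> integral {s..s + l} w"
  proof (rule window_mass_ge[where u = u and s = s and t = "s + l" and v = v and \<tau> = "tz / 2"
        and \<mu> = "m / 2" and B = "3 * (tz / 2)" and K = "K + 1" and M = "M + 1", unfolded \<open>(s + l) - s = l\<close>])
    show "tz / 2 \<le> f x \<and> \<bar>W' x\<bar> \<le> K + 1 \<and> \<bar>W x\<bar> \<le> M + 1" if "x \<in> {u..v}" for x
      using high_energy_allowed[of x] sub that uv by auto
    show "u = 0 \<or> f u \<le> 3 * (tz / 2) \<and> (\<forall>x\<in>{0..u}. W' x \<le> - (m / 2))"
      using ends(1) high_energy_left_end[of u] uv by auto
    show "v = L \<or> f v \<le> 3 * (tz / 2) \<and> (\<forall>x\<in>{v..L}. m / 2 \<le> W' x)"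
      using ends(2) high_energy_right_end[of v] uv by auto
  qed (use uv s l tz m small in \<open>auto simp: l_def\<close>)
  moreover have "s < s + l" "{s..s + l} \<subseteq> {y - \<nu><..<y + \<nu>} \<inter> {0..L}" using s l uv by auto
  ultimately show ?thesis unfolding l_def by blast
qed

lemma mass_near_point_small_perturbation:
  assumes gap: "\<forall>x\<in>{0..L}. \<nu> / 3 \<le> \<bar>x - x0\<bar> \<longrightarrow> V x0 + 4 * \<delta> \<le> V x"
    and y: "y \<in> {0..L}" "V y \<le> E + tz"
    and small: "e \<le> \<nu> * \<delta> / 18" "e \<le> min (\<nu> / 4) \<eta> * sqrt (tz / 2) /
      (2 * (1 + 4 * (M + 1) / (tz / 2)) * (exp ((K + 1) / (tz / 2) * min (\<nu> / 4) \<eta>))\<^sup>2)"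
  shows "\<exists>s t. s < t \<and> {s..t} \<subseteq> {y - \<nu><..<y + \<nu>} \<inter> {0..L} \<and>
    min (1 / 2) (min (\<nu> / 4) \<eta> / (4 * (1 + 4 * (M + 1) / (tz / 2)) * exp ((K + 1) / (tz / 2) * min (\<nu> / 4) \<eta>)) /
      (exp ((K + 1) / (tz / 2) * L) * (L + 2 * (3 * (tz / 2)) / (m / 2)))) \<le> integral {s..t} w"
proof (cases "E \<le> V x0 + \<delta>")
  case True
  have "\<forall>x\<in>{0..L}. \<bar>W x - V x\<bar> \<le> \<delta>" using close tz by force
  then obtain s t where "s < t" "{s..t} \<subseteq> {y - \<nu><..<y + \<nu>} \<inter> {0..L}" "1 / 2 \<le> integral {s..t} w"
    using mass_near_point_low_energy[OF \<nu> \<delta> gap _ True small(1) y(1)] y(2) tz by force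
  then show ?thesis using order_trans[OF min.cobounded1] by blast
next
  case False
  then obtain s t where "s < t" "{s..t} \<subseteq> {y - \<nu><..<y + \<nu>} \<inter> {0..L}"
    "min (\<nu> / 4) \<eta> / (4 * (1 + 4 * (M + 1) / (tz / 2)) * exp ((K + 1) / (tz / 2) * min (\<nu> / 4) \<eta>)) /
      (exp ((K + 1) / (tz / 2) * L) * (L + 2 * (3 * (tz / 2)) / (m / 2))) \<le> integral {s..t} w"
    using mass_near_point_high_energy[OF _ y small(2)] by force
  then show ?thesis using order_trans[OF min.cobounded2] by blast
qed

end

end

locale perturbed_single_well = single_well L x0 V V'
  for L x0 :: real and V V' :: "real \<Rightarrow> real" +
  fixes q q' :: "real \<Rightarrow> real \<Rightarrow> real" and lam :: "real \<Rightarrow> real"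
  assumes q_C1: "\<forall>e\<in>{0<..1}. C1_on_interval L (q e) (q' e)"
    and q_lim: "uniform_limit {0..L} q (\<lambda>x. 0) (at_right 0)"
    and q'_lim: "uniform_limit {0..L} q' (\<lambda>x. 0) (at_right 0)"
    and lam_lim: "(lam \<longlongrightarrow> 0) (at_right 0)"
begin

lemma perturbation_small:
  assumes "r > 0"
  shows "\<exists>e1>0. \<forall>e. 0 < e \<and> e < e1 \<longrightarrow> (\<forall>x\<in>{0..L}. \<bar>q e x\<bar> < r \<and> \<bar>q' e x\<bar> < r) \<and> \<bar>lam e\<bar> < r"
proof -
  have "eventually (\<lambda>e. \<forall>x\<in>{0..L}. dist (q e x) 0 < r) (at_right 0)"
    and "eventually (\<lambda>e. \<forall>x\<in>{0..L}. dist (q' e x) 0 < r) (at_right 0)"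
    using uniform_limitD[OF q_lim assms] uniform_limitD[OF q'_lim assms] .
  moreover have "eventually (\<lambda>e. dist (lam e) 0 < r) (at_right 0)"
    using lam_lim assms unfolding tendsto_iff by blast
  ultimately have "eventually (\<lambda>e. (\<forall>x\<in>{0..L}. \<bar>q e x\<bar> < r \<and> \<bar>q' e x\<bar> < r) \<and> \<bar>lam e\<bar> < r) (at_right 0)"
    by eventually_elim (auto simp: dist_real_def)
  then show ?thesis unfolding eventually_at_right_field by auto
qed

lemma mass_near_point:
  assumes \<nu>: "\<nu> > 0"
  shows "\<exists>C>0. \<exists>e0>0. \<forall>y\<in>{0..L}. \<forall>e\<in>{0<..e0}. \<forall>E a b a' b'.
    dirichlet_eigenfunction L e E (\<lambda>x. V x + q e x) (\<lambda>x. V' x + q' e x) a b a' b' \<longrightarrow> V y - lam e \<le> E \<longrightarrow>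
    (\<exists>s t. s < t \<and> {s..t} \<subseteq> {y - \<nu><..<y + \<nu>} \<inter> {0..L} \<and> C \<le> integral {s..t} (\<lambda>x. (a x)\<^sup>2 + (b x)\<^sup>2))"
proof -
  obtain K where K: "\<forall>x\<in>{0..L}. \<bar>V' x\<bar> \<le> K" using bounded_V' by blast
  obtain M where M: "\<forall>x\<in>{0..L}. \<bar>V x\<bar> \<le> M" using bounded_V by blast
  obtain \<delta> \<eta> m where \<delta>: "0 < \<delta>" "\<delta> \<le> 1" and gap: "\<forall>x\<in>{0..L}. \<nu> / 3 \<le> \<bar>x - x0\<bar> \<longrightarrow> V x0 + 4 * \<delta> \<le> V x"
    and \<eta>: "0 < \<eta>" "\<eta> \<le> x0" "x0 + \<eta> \<le> L" "\<forall>x. \<bar>x - x0\<bar> \<le> \<eta> \<longrightarrow> V x < V x0 + \<delta> / 4"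
    and m: "0 < m" "m \<le> 1" and slope: "\<forall>x\<in>{x0 + \<eta>..L}. m \<le> V' x" "\<forall>x\<in>{0..x0 - \<eta>}. V' x \<le> - m"
    using well_shape_constants[OF \<nu>] by blast
  \<comment> \<open>\<open>tz\<close> bounds the perturbation and \<open>lam e\<close>; \<open>tz \<le> m \<nu> / 8\<close> keeps \<open>y\<close> within
    \<open>\<nu> / 4\<close> of the sublevel interval at height \<open>E - tz\<close> (see \<open>window_near_point\<close>).\<close>
  define tz where "tz = min (\<delta> / 2) (m * \<nu> / 8)"
  have tz: "0 < tz" "tz \<le> \<delta> / 2" "tz \<le> m * \<nu> / 8" using \<delta> m \<nu> by (auto simp: tz_def)
  define l \<rho> D where "l = min (\<nu> / 4) \<eta>" and "\<rho> = 1 + 4 * (M + 1) / (tz / 2)"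
    and "D = exp ((K + 1) / (tz / 2) * min (\<nu> / 4) \<eta>)"
  define C where "C = min (1 / 2) (l / (4 * \<rho> * D) / (exp ((K + 1) / (tz / 2) * L) * (L + 2 * (3 * (tz / 2)) / (m / 2))))"
  obtain e1 where e1: "e1 > 0" "\<And>e. 0 < e \<Longrightarrow> e < e1 \<Longrightarrow>
      (\<forall>x\<in>{0..L}. \<bar>q e x\<bar> < min (tz / 2) (m / 2) \<and> \<bar>q' e x\<bar> < min (tz / 2) (m / 2)) \<and> \<bar>lam e\<bar> < min (tz / 2) (m / 2)"
    using perturbation_small[of "min (tz / 2) (m / 2)"] tz m by auto
  define e0 where "e0 = min (min (\<nu> * \<delta> / 18) (l * sqrt (tz / 2) / (2 * \<rho> * D\<^sup>2))) (e1 / 2)"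
  have "\<bar>V x0\<bar> \<le> M" using M x0_in by auto
  then have pos: "0 < l" "0 < \<rho>" "0 < D" using tz \<nu> \<eta> by (auto simp: l_def \<rho>_def D_def add_pos_nonneg)
  have "C > 0" using pos m L_pos tz by (simp add: C_def add_pos_nonneg)
  moreover have "e0 > 0" using pos \<nu> \<delta> e1 tz by (simp add: e0_def)
  moreover have "\<exists>s t. s < t \<and> {s..t} \<subseteq> {y - \<nu><..<y + \<nu>} \<inter> {0..L} \<and> C \<le> integral {s..t} (\<lambda>x. (a x)\<^sup>2 + (b x)\<^sup>2)"
    if y: "y \<in> {0..L}" and e: "e \<in> {0<..e0}" and Ey: "V y - lam e \<le> E"
      and H: "dirichlet_eigenfunction L e E (\<lambda>x. V x + q e x) (\<lambda>x. V' x + q' e x) a b a' b'"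
    for y e E a b a' b'
  proof -
    interpret S: single_well_eigenfunction L x0 V V' e E "\<lambda>x. V x + q e x" "\<lambda>x. V' x + q' e x" a b a' b'
      by (intro single_well_eigenfunction.intro single_well_axioms H)
    have pert: "(\<forall>x\<in>{0..L}. \<bar>q e x\<bar> < min (tz / 2) (m / 2) \<and> \<bar>q' e x\<bar> < min (tz / 2) (m / 2))
        \<and> \<bar>lam e\<bar> < min (tz / 2) (m / 2)"
      using e1(2)[of e] e by (auto simp: e0_def)
    have "\<exists>s t. s < t \<and> {s..t} \<subseteq> {y - \<nu><..<y + \<nu>} \<inter> {0..L} \<and> C \<le> integral {s..t} S.w"
      unfolding C_def l_def \<rho>_def D_def
      by (rule S.mass_near_point_small_perturbation[OF \<nu> \<delta> m tz \<eta> slope K M _ gap y(1)])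
         (use pert Ey e in \<open>auto simp: e0_def l_def \<rho>_def D_def abs_less_iff\<close>)
    then show ?thesis by (simp add: S.w_def[abs_def])
  qed
  ultimately show ?thesis by blast
qed

lemma boundary_flux:
  assumes \<nu>: "\<nu> > 0"
  shows "\<exists>C>0. \<exists>e0>0. \<forall>z\<in>{0, L}. \<forall>e\<in>{0<..e0}. \<forall>E a b a' b'.
    dirichlet_eigenfunction L e E (\<lambda>x. V x + q e x) (\<lambda>x. V' x + q' e x) a b a' b' \<longrightarrow> V z + \<nu> \<le> E \<longrightarrow>
    C \<le> e\<^sup>2 * ((a' z)\<^sup>2 + (b' z)\<^sup>2) / (\<bar>E\<bar> + 1)"
proof -
  obtain K where K: "\<forall>x\<in>{0..L}. \<bar>V' x\<bar> \<le> K" using bounded_V' by blast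
  obtain M where M: "\<forall>x\<in>{0..L}. \<bar>V x\<bar> \<le> M" using bounded_V by blast
  obtain r where r: "r > 0" "r \<le> L" "\<forall>z\<in>{0, L}. \<forall>x\<in>{0..L}. \<bar>x - z\<bar> \<le> r \<longrightarrow> \<bar>V x - V z\<bar> < \<nu> / 4"
    using V_near_endpoints[of "\<nu> / 4"] \<nu> by auto
  obtain C1 e1 where C1: "C1 > 0" "e1 > 0" and mass: "\<forall>y\<in>{0..L}. \<forall>e\<in>{0<..e1}. \<forall>E a b a' b'.
    dirichlet_eigenfunction L e E (\<lambda>x. V x + q e x) (\<lambda>x. V' x + q' e x) a b a' b' \<longrightarrow> V y - lam e \<le> E \<longrightarrow>
    (\<exists>s t. s < t \<and> {s..t} \<subseteq> {y - r<..<y + r} \<inter> {0..L} \<and> C1 \<le> integral {s..t} (\<lambda>x. (a x)\<^sup>2 + (b x)\<^sup>2))"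
    using mass_near_point[OF r(1)] by blast
  obtain e2 where e2: "e2 > 0" "\<And>e. 0 < e \<Longrightarrow> e < e2 \<Longrightarrow>
      (\<forall>x\<in>{0..L}. \<bar>q e x\<bar> < min (\<nu> / 4) 1 \<and> \<bar>q' e x\<bar> < min (\<nu> / 4) 1) \<and> \<bar>lam e\<bar> < min (\<nu> / 4) 1"
    using perturbation_small[of "min (\<nu> / 4) 1"] \<nu> by auto
  define C where "C = C1 / (r * exp ((K + 1) / (\<nu> / 2) * r) * (1 + 2 * ((M + \<nu>) + 1) / \<nu>))"
  have "\<bar>V 0\<bar> \<le> M" using M L_pos by auto
  then have "C > 0" using C1 r \<nu> by (simp add: C_def add_pos_nonneg)
  moreover have "min e1 (e2 / 2) > 0" using C1 e2 by simp
  moreover have "C \<le> e\<^sup>2 * ((a' z)\<^sup>2 + (b' z)\<^sup>2) / (\<bar>E\<bar> + 1)"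
    if z: "z \<in> {0, L}" and e: "e \<in> {0<..min e1 (e2 / 2)}" and Ez: "V z + \<nu> \<le> E"
      and H: "dirichlet_eigenfunction L e E (\<lambda>x. V x + q e x) (\<lambda>x. V' x + q' e x) a b a' b'"
    for z e E a b a' b'
  proof -
    interpret S: single_well_eigenfunction L x0 V V' e E "\<lambda>x. V x + q e x" "\<lambda>x. V' x + q' e x" a b a' b'
      by (intro single_well_eigenfunction.intro single_well_axioms H)
    have pert: "(\<forall>x\<in>{0..L}. \<bar>q e x\<bar> < min (\<nu> / 4) 1 \<and> \<bar>q' e x\<bar> < min (\<nu> / 4) 1) \<and> \<bar>lam e\<bar> < min (\<nu> / 4) 1"
      using e2(2)[of e] e by auto
    have zI: "z \<in> {0..L}" using z L_pos by auto
    have "V z - lam e \<le> E" using Ez pert \<nu> by (auto simp: abs_less_iff)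
    then obtain s t where window: "{s..t} \<subseteq> {z - r<..<z + r} \<inter> {0..L}" "C1 \<le> integral {s..t} S.w"
      using mass[rule_format, OF zI, of e E a b a' b'] H e by (auto simp: S.w_def[abs_def])
    have near: "\<forall>x\<in>{0..L}. \<bar>x - z\<bar> \<le> r \<longrightarrow> \<bar>V x - V z\<bar> < \<nu> / 4" using r(3) z by blast
    have close: "\<forall>x\<in>{0..L}. \<bar>V x + q e x - V x\<bar> < \<nu> / 4 \<and> \<bar>V' x + q' e x - V' x\<bar> < 1"
      using pert by auto
    have "C \<le> e\<^sup>2 * S.p z / (\<bar>E\<bar> + 1)"
      unfolding C_def by (rule S.boundary_p_ge_of_mass[OF z \<nu> r(1,2) near close K M Ez window])
    then show ?thesis by (simp add: S.p_def)
  qed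
  ultimately show ?thesis by blast
qed

end

section \<open>Solutions of the weak equation\<close>

definition normalized_dirichlet_solution ::
    "real \<Rightarrow> real \<Rightarrow> (real \<Rightarrow> real) \<Rightarrow> real \<Rightarrow> (real \<Rightarrow> complex) \<Rightarrow> (real \<Rightarrow> complex) \<Rightarrow> (real \<Rightarrow> complex) \<Rightarrow> bool"
  where "normalized_dirichlet_solution L e W E \<psi> \<psi>' \<psi>'' \<longleftrightarrow>
    H2_on L \<psi> \<psi>' \<psi>'' \<and> dirichlet_bc L \<psi> \<and> L2_norm_on {0..L} \<psi> = 1 \<and>
    (AE x in lebesgue. x \<in> {0..L} \<longrightarrow>
      - (complex_of_real (e\<^sup>2)) * \<psi>'' x + complex_of_real (W x) * \<psi> x = complex_of_real E * \<psi> x)"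

lemma has_vector_derivative_of_integral_ae:
  fixes F g h :: "real \<Rightarrow> complex"
  assumes F: "\<And>x. x \<in> {0..L} \<Longrightarrow> F x = F 0 + integral {0..x} g"
    and ae: "AE x in lebesgue. x \<in> {0..L} \<longrightarrow> g x = h x"
    and h: "continuous_on {0..L} h" and x: "x \<in> {0..L}"
  shows "(F has_vector_derivative h x) (at x within {0..L})"
proof -
  obtain N where N: "\<And>x. x \<in> space lebesgue - N \<Longrightarrow> x \<in> {0..L} \<longrightarrow> g x = h x"
    "N \<in> null_sets lebesgue"
    using AE_E3[OF ae] by blast
  have negligible: "negligible N" using N(2) negligible_iff_null_sets by blast
  have F_h: "F y = F 0 + integral {0..y} h" if y: "y \<in> {0..L}" for y
  proof -
    have "integral {0..y} g = integral {0..y} h"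
      by (rule integral_spike[OF negligible]) (use N(1) y in auto)
    then show ?thesis using F[OF y] by simp
  qed
  have "((\<lambda>y. F 0 + integral {0..y} h) has_vector_derivative h x) (at x within {0..L})"
    using has_vector_derivative_add[OF has_vector_derivative_const integral_has_vector_derivative[OF h x]]
    by simp
  then show ?thesis
  proof (rule has_vector_derivative_transform_within[where d = 1])
    fix y assume "y \<in> {0..L}"
    then show "F 0 + integral {0..y} h = F y" by (rule F_h[symmetric])
  qed (use x in auto)
qed

lemma solution_derivative_has_vector_derivative:
  fixes \<psi> \<psi>' \<psi>'' :: "real \<Rightarrow> complex"
  assumes e: "0 < e" and W: "continuous_on {0..L} W"
    and sol: "normalized_dirichlet_solution L e W E \<psi> \<psi>' \<psi>''" and x: "x \<in> {0..L}"
  shows "(\<psi>' has_vector_derivative complex_of_real ((W x - E) / e\<^sup>2) * \<psi> x) (at x within {0..L})"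
proof (rule has_vector_derivative_of_integral_ae[OF _ _ _ x])
  have \<psi>_deriv: "\<And>x. x \<in> {0..L} \<Longrightarrow> (\<psi> has_vector_derivative \<psi>' x) (at x within {0..L})"
    and "\<And>x. x \<in> {0..L} \<Longrightarrow> \<psi>' x = \<psi>' 0 + integral {0..x} \<psi>''"
    using sol unfolding normalized_dirichlet_solution_def H2_on_def by blast+
  then show "\<And>x. x \<in> {0..L} \<Longrightarrow> \<psi>' x = \<psi>' 0 + integral {0..x} \<psi>''" by blast
  have "continuous_on {0..L} \<psi>"
    using \<psi>_deriv has_vector_derivative_continuous unfolding continuous_on_eq_continuous_within by blast
  then show "continuous_on {0..L} (\<lambda>x. complex_of_real ((W x - E) / e\<^sup>2) * \<psi> x)"
    using W e by (intro continuous_intros) auto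
  show "AE x in lebesgue. x \<in> {0..L} \<longrightarrow> \<psi>'' x = complex_of_real ((W x - E) / e\<^sup>2) * \<psi> x"
    using conjunct2[OF conjunct2[OF conjunct2[OF sol[unfolded normalized_dirichlet_solution_def]]]]
  proof (eventually_elim, intro impI)
    fix x assume "x \<in> {0..L} \<longrightarrow>
      - complex_of_real (e\<^sup>2) * \<psi>'' x + complex_of_real (W x) * \<psi> x = complex_of_real E * \<psi> x"
      and "x \<in> {0..L}"
    then have "complex_of_real (e\<^sup>2) * \<psi>'' x = complex_of_real (W x - E) * \<psi> x"
      by (simp add: algebra_simps)
    then show "\<psi>'' x = complex_of_real ((W x - E) / e\<^sup>2) * \<psi> x" using e by (simp add: field_simps)
  qed
qed

lemma dirichlet_eigenfunction_Re_Im: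
  fixes \<psi> \<psi>' \<psi>'' :: "real \<Rightarrow> complex"
  assumes L: "0 < L" and e: "0 < e" and W: "C1_on_interval L W W'"
    and sol: "normalized_dirichlet_solution L e W E \<psi> \<psi>' \<psi>''"
  shows "dirichlet_eigenfunction L e E W W' (\<lambda>x. Re (\<psi> x)) (\<lambda>x. Im (\<psi> x)) (\<lambda>x. Re (\<psi>' x)) (\<lambda>x. Im (\<psi>' x))"
proof
  have W_deriv: "\<And>x. x \<in> {0..L} \<Longrightarrow> (W has_real_derivative W' x) (at x within {0..L})"
    using W unfolding C1_on_interval_def by blast
  then show "x \<in> {0..L} \<Longrightarrow> (W has_real_derivative W' x) (at x within {0..L})" for x .
  have "continuous_on {0..L} W"
    using W_deriv DERIV_continuous unfolding continuous_on_eq_continuous_within by blast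
  note \<psi>'_deriv = solution_derivative_has_vector_derivative[OF e this sol]
  show "((\<lambda>x. Re (\<psi>' x)) has_real_derivative (W x - E) / e\<^sup>2 * Re (\<psi> x)) (at x within {0..L})"
    and "((\<lambda>x. Im (\<psi>' x)) has_real_derivative (W x - E) / e\<^sup>2 * Im (\<psi> x)) (at x within {0..L})"
    if "x \<in> {0..L}" for x
    using has_field_derivative_Re[OF \<psi>'_deriv[OF that]] has_field_derivative_Im[OF \<psi>'_deriv[OF that]]
    by simp_all
  have \<psi>_deriv: "\<And>x. x \<in> {0..L} \<Longrightarrow> (\<psi> has_vector_derivative \<psi>' x) (at x within {0..L})"
    using sol unfolding normalized_dirichlet_solution_def H2_on_def by blast
  show "((\<lambda>x. Re (\<psi> x)) has_real_derivative Re (\<psi>' x)) (at x within {0..L})"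
    and "((\<lambda>x. Im (\<psi> x)) has_real_derivative Im (\<psi>' x)) (at x within {0..L})"
    if "x \<in> {0..L}" for x
    using has_field_derivative_Re[OF \<psi>_deriv[OF that]] has_field_derivative_Im[OF \<psi>_deriv[OF that]]
    by simp_all
  have "integral {0..L} (\<lambda>x. (norm (\<psi> x))\<^sup>2) = 1"
    using sol unfolding normalized_dirichlet_solution_def L2_norm_on_def by simp
  then show "integral {0..L} (\<lambda>x. (Re (\<psi> x))\<^sup>2 + (Im (\<psi> x))\<^sup>2) = 1" by (simp add: cmod_power2)
qed (use L e sol in \<open>auto simp: normalized_dirichlet_solution_def dirichlet_bc_def\<close>)

lemma integral_le_integral_window:
  fixes g :: "real \<Rightarrow> real"
  assumes g: "continuous_on {0..L} g" "\<And>x. 0 \<le> g x"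
    and st: "{s..t} \<subseteq> {y - \<nu><..<y + \<nu>} \<inter> {0..L}"
  shows "integral {s..t} g \<le> integral ({y - \<nu><..<y + \<nu>} \<inter> {0..L}) g"
proof -
  define U lo hi where "U = {y - \<nu><..<y + \<nu>} \<inter> {0..L}" and "lo = max 0 (y - \<nu>)" and "hi = min L (y + \<nu>)"
  have gi: "g integrable_on {lo..hi}"
    by (rule integrable_continuous_subinterval[OF g(1)]) (auto simp: lo_def hi_def)
  have "g integrable_on U"
  proof (rule integrable_spike_set[OF gi])
    show "negligible {x \<in> {lo..hi} - U. g x \<noteq> 0}"
      by (rule negligible_subset[of "{lo, hi}"]) (auto simp: U_def lo_def hi_def)
    show "negligible {x \<in> U - {lo..hi}. g x \<noteq> 0}"
      by (rule negligible_subset[of "{}"]) (auto simp: U_def lo_def hi_def)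
  qed
  moreover have "{s..t} \<subseteq> {lo..hi}" using st by (auto simp: lo_def hi_def subset_iff)
  ultimately show ?thesis
    using st g(2) gi unfolding U_def[symmetric]
    by (intro integral_subset_le) (auto intro: integrable_on_subinterval)
qed

context perturbed_single_well
begin

lemma dirichlet_eigenfunction_of_solution:
  assumes e: "e \<in> {0<..1}" and sol: "normalized_dirichlet_solution L e (\<lambda>x. V x + q e x) E \<psi> \<psi>' \<psi>''"
  shows "dirichlet_eigenfunction L e E (\<lambda>x. V x + q e x) (\<lambda>x. V' x + q' e x)
    (\<lambda>x. Re (\<psi> x)) (\<lambda>x. Im (\<psi> x)) (\<lambda>x. Re (\<psi>' x)) (\<lambda>x. Im (\<psi>' x))"
proof (rule dirichlet_eigenfunction_Re_Im[OF L_pos _ _ sol])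
  have q: "C1_on_interval L (q e) (q' e)" using q_C1 e by blast
  then show "C1_on_interval L (\<lambda>x. V x + q e x) (\<lambda>x. V' x + q' e x)"
    unfolding C1_on_interval_def using V_deriv V'_cont by (auto intro: derivative_intros continuous_intros)
qed (use e in auto)

lemma mass_near_point_L2:
  assumes \<nu>: "\<nu> > 0"
  shows "\<exists>C>0. \<exists>e0>0. \<forall>y\<in>{0..L}. \<forall>e\<in>{0<..e0}. \<forall>E \<psi> \<psi>' \<psi>''.
    normalized_dirichlet_solution L e (\<lambda>x. V x + q e x) E \<psi> \<psi>' \<psi>'' \<longrightarrow> V y - lam e \<le> E \<longrightarrow>
    C \<le> L2_norm_on ({y - \<nu><..<y + \<nu>} \<inter> {0..L}) \<psi>"
proof -
  obtain C e0 where C: "C > 0" "e0 > 0" and mass: "\<forall>y\<in>{0..L}. \<forall>e\<in>{0<..e0}. \<forall>E a b a' b'.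
    dirichlet_eigenfunction L e E (\<lambda>x. V x + q e x) (\<lambda>x. V' x + q' e x) a b a' b' \<longrightarrow> V y - lam e \<le> E \<longrightarrow>
    (\<exists>s t. s < t \<and> {s..t} \<subseteq> {y - \<nu><..<y + \<nu>} \<inter> {0..L} \<and> C \<le> integral {s..t} (\<lambda>x. (a x)\<^sup>2 + (b x)\<^sup>2))"
    using mass_near_point[OF \<nu>] by blast
  have "\<forall>y\<in>{0..L}. \<forall>e\<in>{0<..min e0 1}. \<forall>E \<psi> \<psi>' \<psi>''.
    normalized_dirichlet_solution L e (\<lambda>x. V x + q e x) E \<psi> \<psi>' \<psi>'' \<longrightarrow> V y - lam e \<le> E \<longrightarrow>
    sqrt C \<le> L2_norm_on ({y - \<nu><..<y + \<nu>} \<inter> {0..L}) \<psi>"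
  proof (intro ballI allI impI)
    fix y e E \<psi> \<psi>' \<psi>''
    assume y: "y \<in> {0..L}" and e: "e \<in> {0<..min e0 1}"
      and sol: "normalized_dirichlet_solution L e (\<lambda>x. V x + q e x) E \<psi> \<psi>' \<psi>''" and Ey: "V y - lam e \<le> E"
    have S: "dirichlet_eigenfunction L e E (\<lambda>x. V x + q e x) (\<lambda>x. V' x + q' e x)
        (\<lambda>x. Re (\<psi> x)) (\<lambda>x. Im (\<psi> x)) (\<lambda>x. Re (\<psi>' x)) (\<lambda>x. Im (\<psi>' x))"
      by (rule dirichlet_eigenfunction_of_solution[OF _ sol]) (use e in auto)
    interpret S: dirichlet_eigenfunction L e E "\<lambda>x. V x + q e x" "\<lambda>x. V' x + q' e x"
        "\<lambda>x. Re (\<psi> x)" "\<lambda>x. Im (\<psi> x)" "\<lambda>x. Re (\<psi>' x)" "\<lambda>x. Im (\<psi>' x)"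
      by (rule S)
    have w_eq: "S.w = (\<lambda>x. (norm (\<psi> x))\<^sup>2)" by (simp add: S.w_def[abs_def] cmod_power2)
    have "e \<in> {0<..e0}" using e by auto
    from mass[rule_format, OF y this S Ey] obtain s t where st: "{s..t} \<subseteq> {y - \<nu><..<y + \<nu>} \<inter> {0..L}"
      and "C \<le> integral {s..t} S.w"
      unfolding S.w_def[abs_def] by blast
    moreover have "integral {s..t} S.w \<le> integral ({y - \<nu><..<y + \<nu>} \<inter> {0..L}) (\<lambda>x. (norm (\<psi> x))\<^sup>2)"
      unfolding w_eq[symmetric] by (rule integral_le_integral_window[OF S.continuous_w S.w_nonneg st])
    ultimately show "sqrt C \<le> L2_norm_on ({y - \<nu><..<y + \<nu>} \<inter> {0..L}) \<psi>"
      unfolding L2_norm_on_def by simp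
  qed
  moreover have "sqrt C > 0" "min e0 1 > 0" using C by auto
  ultimately show ?thesis by blast
qed

lemma boundary_derivative_ge:
  assumes \<nu>: "\<nu> > 0"
  shows "\<exists>C>0. \<exists>e0>0. \<forall>z\<in>{0, L}. \<forall>e\<in>{0<..e0}. \<forall>E \<psi> \<psi>' \<psi>''.
    normalized_dirichlet_solution L e (\<lambda>x. V x + q e x) E \<psi> \<psi>' \<psi>'' \<longrightarrow> V z + \<nu> \<le> E \<longrightarrow>
    C \<le> e / sqrt (\<bar>E\<bar> + 1) * norm (\<psi>' z)"
proof -
  obtain C e0 where C: "C > 0" "e0 > 0" and flux: "\<forall>z\<in>{0, L}. \<forall>e\<in>{0<..e0}. \<forall>E a b a' b'.
    dirichlet_eigenfunction L e E (\<lambda>x. V x + q e x) (\<lambda>x. V' x + q' e x) a b a' b' \<longrightarrow> V z + \<nu> \<le> E \<longrightarrow>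
    C \<le> e\<^sup>2 * ((a' z)\<^sup>2 + (b' z)\<^sup>2) / (\<bar>E\<bar> + 1)"
    using boundary_flux[OF \<nu>] by blast
  have "\<forall>z\<in>{0, L}. \<forall>e\<in>{0<..min e0 1}. \<forall>E \<psi> \<psi>' \<psi>''.
    normalized_dirichlet_solution L e (\<lambda>x. V x + q e x) E \<psi> \<psi>' \<psi>'' \<longrightarrow> V z + \<nu> \<le> E \<longrightarrow>
    sqrt C \<le> e / sqrt (\<bar>E\<bar> + 1) * norm (\<psi>' z)"
  proof (intro ballI allI impI)
    fix z e E \<psi> \<psi>' \<psi>''
    assume z: "z \<in> {0, L}" and e: "e \<in> {0<..min e0 1}"
      and sol: "normalized_dirichlet_solution L e (\<lambda>x. V x + q e x) E \<psi> \<psi>' \<psi>''" and Ez: "V z + \<nu> \<le> E"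
    have "C \<le> e\<^sup>2 * ((Re (\<psi>' z))\<^sup>2 + (Im (\<psi>' z))\<^sup>2) / (\<bar>E\<bar> + 1)"
      using flux[rule_format, OF z, of e E] dirichlet_eigenfunction_of_solution[OF _ sol] e Ez by auto
    then have "sqrt C \<le> sqrt (e\<^sup>2 * (norm (\<psi>' z))\<^sup>2 / (\<bar>E\<bar> + 1))" by (simp add: cmod_power2)
    also have "\<dots> = e / sqrt (\<bar>E\<bar> + 1) * norm (\<psi>' z)"
      using e by (simp add: real_sqrt_divide real_sqrt_mult)
    finally show "sqrt C \<le> e / sqrt (\<bar>E\<bar> + 1) * norm (\<psi>' z)" .
  qed
  moreover have "sqrt C > 0" "min e0 1 > 0" using C by auto
  ultimately show ?thesis by blast
qed


lemma uniform_lower_bounds: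
  assumes \<nu>: "\<nu> > 0"
  shows "\<exists>C>0. \<exists>e0>0. e0 < 1 \<and>
    (\<forall>y\<in>{0..L}. \<forall>e\<in>{0<..e0}. \<forall>E \<psi> \<psi>' \<psi>''.
      normalized_dirichlet_solution L e (\<lambda>x. V x + q e x) E \<psi> \<psi>' \<psi>'' \<longrightarrow>
      (E \<ge> V y - lam e \<longrightarrow> L2_norm_on ({y - \<nu><..<y + \<nu>} \<inter> {0..L}) \<psi> \<ge> C) \<and>
      (E \<ge> V 0 + \<nu> \<longrightarrow> e / sqrt (\<bar>E\<bar> + 1) * norm (\<psi>' 0) \<ge> C) \<and>
      (E \<ge> V L + \<nu> \<longrightarrow> e / sqrt (\<bar>E\<bar> + 1) * norm (\<psi>' L) \<ge> C))"
proof -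
  obtain C1 e1 where C1: "C1 > 0" "e1 > 0" and mass: "\<forall>y\<in>{0..L}. \<forall>e\<in>{0<..e1}. \<forall>E \<psi> \<psi>' \<psi>''.
      normalized_dirichlet_solution L e (\<lambda>x. V x + q e x) E \<psi> \<psi>' \<psi>'' \<longrightarrow> V y - lam e \<le> E \<longrightarrow>
      C1 \<le> L2_norm_on ({y - \<nu><..<y + \<nu>} \<inter> {0..L}) \<psi>"
    using mass_near_point_L2[OF \<nu>] by blast
  obtain C2 e2 where C2: "C2 > 0" "e2 > 0" and flux: "\<forall>z\<in>{0, L}. \<forall>e\<in>{0<..e2}. \<forall>E \<psi> \<psi>' \<psi>''.
      normalized_dirichlet_solution L e (\<lambda>x. V x + q e x) E \<psi> \<psi>' \<psi>'' \<longrightarrow> V z + \<nu> \<le> E \<longrightarrow>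
      C2 \<le> e / sqrt (\<bar>E\<bar> + 1) * norm (\<psi>' z)"
    using boundary_derivative_ge[OF \<nu>] by blast
  define C e0 where "C = min C1 C2" and "e0 = min (min e1 e2) (1 / 2)"
  have "\<forall>y\<in>{0..L}. \<forall>e\<in>{0<..e0}. \<forall>E \<psi> \<psi>' \<psi>''.
      normalized_dirichlet_solution L e (\<lambda>x. V x + q e x) E \<psi> \<psi>' \<psi>'' \<longrightarrow>
      (E \<ge> V y - lam e \<longrightarrow> L2_norm_on ({y - \<nu><..<y + \<nu>} \<inter> {0..L}) \<psi> \<ge> C) \<and>
      (E \<ge> V 0 + \<nu> \<longrightarrow> e / sqrt (\<bar>E\<bar> + 1) * norm (\<psi>' 0) \<ge> C) \<and>
      (E \<ge> V L + \<nu> \<longrightarrow> e / sqrt (\<bar>E\<bar> + 1) * norm (\<psi>' L) \<ge> C)"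
  proof (intro ballI allI impI)
    fix y e E \<psi> \<psi>' \<psi>''
    assume y: "y \<in> {0..L}" and e: "e \<in> {0<..e0}"
      and sol: "normalized_dirichlet_solution L e (\<lambda>x. V x + q e x) E \<psi> \<psi>' \<psi>''"
    have e12: "e \<in> {0<..e1}" "e \<in> {0<..e2}" using e by (auto simp: e0_def)
    have "V y - lam e \<le> E \<Longrightarrow> C1 \<le> L2_norm_on ({y - \<nu><..<y + \<nu>} \<inter> {0..L}) \<psi>"
      using mass y e12 sol by blast
    moreover have "z \<in> {0, L} \<Longrightarrow> V z + \<nu> \<le> E \<Longrightarrow> C2 \<le> e / sqrt (\<bar>E\<bar> + 1) * norm (\<psi>' z)" for z
      using flux e12 sol by blast
    ultimately show "(E \<ge> V y - lam e \<longrightarrow> L2_norm_on ({y - \<nu><..<y + \<nu>} \<inter> {0..L}) \<psi> \<ge> C) \<and>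
      (E \<ge> V 0 + \<nu> \<longrightarrow> e / sqrt (\<bar>E\<bar> + 1) * norm (\<psi>' 0) \<ge> C) \<and>
      (E \<ge> V L + \<nu> \<longrightarrow> e / sqrt (\<bar>E\<bar> + 1) * norm (\<psi>' L) \<ge> C)"
      unfolding C_def by (meson insertCI min.coboundedI1 min.coboundedI2)
  qed
  moreover have "C > 0" "e0 > 0" "e0 < 1" using C1 C2 by (auto simp: C_def e0_def)
  ultimately show ?thesis by blast
qed

end

theorem proposition2p3:
  fixes L x0 :: real and V V' :: "real \<Rightarrow> real"
    and q q' :: "real \<Rightarrow> real \<Rightarrow> real" and lam :: "real \<Rightarrow> real" and \<nu> :: real
  assumes L_pos: "L > 0"
    and V_C1: "C1_on_interval L V V'"
    and crit: "\<forall>x\<in>{0..L}. V' x = 0 \<longleftrightarrow> x = x0"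
    and x0_in: "0 < x0" "x0 < L"
    and x0_min: "\<forall>x\<in>{0..L}. V x0 \<le> V x"
    and q_C1: "\<forall>e\<in>{0<..1}. C1_on_interval L (q e) (q' e)"
    and q_lim: "uniform_limit {0..L} q (\<lambda>x. 0) (at_right 0)"
    and q'_lim: "uniform_limit {0..L} q' (\<lambda>x. 0) (at_right 0)"
    and lam_lim: "(lam \<longlongrightarrow> 0) (at_right 0)"
    and nu_pos: "\<nu> > 0"
  shows "\<exists>C>0. \<exists>e0>0. e0 < 1 \<and>
    (\<forall>y\<in>{0..L}. \<forall>e\<in>{0<..e0}. \<forall>E::real. \<forall>\<psi> \<psi>' \<psi>'' :: real \<Rightarrow> complex.
       H2_on L \<psi> \<psi>' \<psi>'' \<and> dirichlet_bc L \<psi> \<and> L2_norm_on {0..L} \<psi> = 1 \<and>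
       (AE x in lebesgue. x \<in> {0..L} \<longrightarrow>
          - (complex_of_real (e\<^sup>2)) * \<psi>'' x + complex_of_real (V x + q e x) * \<psi> x
            = complex_of_real E * \<psi> x)
       \<longrightarrow>
       (E \<ge> V y - lam e \<longrightarrow> L2_norm_on ({y - \<nu><..<y + \<nu>} \<inter> {0..L}) \<psi> \<ge> C) \<and>
       (E \<ge> V 0 + \<nu> \<longrightarrow> e / sqrt (\<bar>E\<bar> + 1) * norm (\<psi>' 0) \<ge> C) \<and>
       (E \<ge> V L + \<nu> \<longrightarrow> e / sqrt (\<bar>E\<bar> + 1) * norm (\<psi>' L) \<ge> C))"
proof -
  interpret perturbed_single_well L x0 V V' q q' lam
    using L_pos V_C1[unfolded C1_on_interval_def] crit x0_in x0_min q_C1 q_lim q'_lim lam_lim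
    by unfold_locales auto
  show ?thesis
    using uniform_lower_bounds[OF nu_pos] unfolding normalized_dirichlet_solution_def .
qed

end
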